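(* For fixed $\vec a=(a,\hat a)\in\mathcal M$, the space $\mathcal H\times\mathcal H$ is a commutative associative algebra with respect to the multiplication $(\omega_1,\hat\omega_1)\circ(\omega_2,\hat\omega_2)=\big(\omega_2(\omega_1a')_+-\omega_1(\omega_2a')_--\omega_2(\hat\omega_1\hat a')_--\omega_1(\hat\omega_2\hat a')_-,\ \hat\omega_2(\hat\omega_1\hat a')_+-\hat\omega_1(\hat\omega_2\hat a')_-+\hat\omega_1(\omega_2a')_++\hat\omega_2(\omega_1a')_+\big)$.
   Context: Fix $m\ge1$, positive integers $n_0,\dots,n_m$, nonzero integers $d_1,\dots,d_m$; $D_1,\dots,D_m\subset\mathbb C$ pairwise disjoint closed disks, $\gamma_i=\partial D_i$ positively oriented, $\mathbf D^{int}=\bigcup(D_i\setminus\gamma_i)$, $\mathbf D^{ext}=\mathbb P^1\setminus\bigcup D_i$; $\mathcal H$ = germs of functions holomorphic near $\bigcup\gamma_i$; for $f\in\mathcal H$, $f_+(z)=\frac1{2\pi\mathrm i}\sum_s\oint_{\gamma_s}\frac{f(p)}{p-z}dp$ ($z$ inside the disks), $f_-=-(\text{same})$ ($z$ outside), $f_-(\infty)=0$, so $f=f_++f_-$ near the circles. $\mathcal M$: pairs $(a,\hat a)\in\mathcal H\times\mathcal H$, $a$ meromorphic on $\mathbf D^{ext}$, only pole $\infty$, $a=z^{n_0}+a_{n_0-2}z^{n_0-2}+\cdots$; $\hat a$ meromorphic on $\mathbf D^{int}$, only poles $\varphi_j\in D_j\setminus\gamma_j$, $\hat a=\hat a_{j,-n_j}(z-\varphi_j)^{-n_j}+\cdots$,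 $\hat a_{j,-n_j}\ne0$; $a-\hat a=w_j^{d_j}$ on $\gamma_j$, $w_j$ holomorphic near $\gamma_j$, $w_j'\ne0$, $w_j(\gamma_j)$ winding once about $0$. $'=\partial_z$. *)

theory Defs
  imports "HOL-Complex_Analysis.Complex_Analysis" "HOL-Library.Landau_Symbols"
begin

definition circles :: "(nat \<Rightarrow> complex) \<Rightarrow> (nat \<Rightarrow> real) \<Rightarrow> nat \<Rightarrow> complex set" where
  "circles c r m = (\<Union>i\<in>{1..m}. sphere (c i) (r i))"

definition Dint :: "(nat \<Rightarrow> complex) \<Rightarrow> (nat \<Rightarrow> real) \<Rightarrow> nat \<Rightarrow> complex set" where
  "Dint c r m = (\<Union>i\<in>{1..m}. ball (c i) (r i))"

text \<open>Finite part of the exterior (the point at infinity is handled separately).\<close>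
definition Dext :: "(nat \<Rightarrow> complex) \<Rightarrow> (nat \<Rightarrow> real) \<Rightarrow> nat \<Rightarrow> complex set" where
  "Dext c r m = - (\<Union>i\<in>{1..m}. cball (c i) (r i))"

text \<open>Representatives of germs in H: holomorphic on some open neighbourhood of the circles.\<close>
definition inH :: "(nat \<Rightarrow> complex) \<Rightarrow> (nat \<Rightarrow> real) \<Rightarrow> nat \<Rightarrow> (complex \<Rightarrow> complex) \<Rightarrow> bool" where
  "inH c r m f \<longleftrightarrow> (\<exists>U. open U \<and> circles c r m \<subseteq> U \<and> f holomorphic_on U)"

definition germ_eq :: "(nat \<Rightarrow> complex) \<Rightarrow> (nat \<Rightarrow> real) \<Rightarrow> nat \<Rightarrow> (complex \<Rightarrow> complex) \<Rightarrow> (complex \<Rightarrow> complex) \<Rightarrow> bool" where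
  "germ_eq c r m f g \<longleftrightarrow> (\<exists>U. open U \<and> circles c r m \<subseteq> U \<and> (\<forall>z\<in>U. f z = g z))"

definition cauchy_sum :: "(nat \<Rightarrow> complex) \<Rightarrow> (nat \<Rightarrow> real) \<Rightarrow> nat \<Rightarrow> (complex \<Rightarrow> complex) \<Rightarrow> complex \<Rightarrow> complex" where
  "cauchy_sum c r m f z =
     (1 / (2 * of_real pi * \<i>)) * (\<Sum>s=1..m. contour_integral (circlepath (c s) (r s)) (\<lambda>p. f p / (p - z)))"

text \<open>f_+ : the germ at the circles of (the holomorphic continuation of) the Cauchy integral taken
  for z inside the disks; f_- : likewise for minus the Cauchy integral taken for z outside.\<close>
definition plus_part :: "(nat \<Rightarrow> complex) \<Rightarrow> (nat \<Rightarrow> real) \<Rightarrow> nat \<Rightarrow> (complex \<Rightarrow> complex) \<Rightarrow> (complex \<Rightarrow> complex)" where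
  "plus_part c r m f = (SOME g. inH c r m g \<and>
      (\<exists>V. open V \<and> circles c r m \<subseteq> V \<and> (\<forall>z\<in>V \<inter> Dint c r m. g z = cauchy_sum c r m f z)))"

definition minus_part :: "(nat \<Rightarrow> complex) \<Rightarrow> (nat \<Rightarrow> real) \<Rightarrow> nat \<Rightarrow> (complex \<Rightarrow> complex) \<Rightarrow> (complex \<Rightarrow> complex)" where
  "minus_part c r m f = (SOME g. inH c r m g \<and>
      (\<exists>V. open V \<and> circles c r m \<subseteq> V \<and> (\<forall>z\<in>V \<inter> Dext c r m. g z = - cauchy_sum c r m f z)))"

definition circ_prod :: "(nat \<Rightarrow> complex) \<Rightarrow> (nat \<Rightarrow> real) \<Rightarrow> nat \<Rightarrow> (complex \<Rightarrow> complex) \<Rightarrow> (complex \<Rightarrow> complex)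
   \<Rightarrow> (complex \<Rightarrow> complex) \<times> (complex \<Rightarrow> complex) \<Rightarrow> (complex \<Rightarrow> complex) \<times> (complex \<Rightarrow> complex)
   \<Rightarrow> (complex \<Rightarrow> complex) \<times> (complex \<Rightarrow> complex)" where
  "circ_prod c r m a ah x y =
    (let w1 = fst x; wh1 = snd x; w2 = fst y; wh2 = snd y;
         P = plus_part c r m; M = minus_part c r m
     in (\<lambda>z. w2 z * P (\<lambda>p. w1 p * deriv a p) z - w1 z * M (\<lambda>p. w2 p * deriv a p) z
             - w2 z * M (\<lambda>p. wh1 p * deriv ah p) z - w1 z * M (\<lambda>p. wh2 p * deriv ah p) z,
         \<lambda>z. wh2 z * P (\<lambda>p. wh1 p * deriv ah p) z - wh1 z * M (\<lambda>p. wh2 p * deriv ah p) z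
             + wh1 z * P (\<lambda>p. w2 p * deriv a p) z + wh2 z * P (\<lambda>p. w1 p * deriv a p) z))"

definition inHH :: "(nat \<Rightarrow> complex) \<Rightarrow> (nat \<Rightarrow> real) \<Rightarrow> nat \<Rightarrow> (complex \<Rightarrow> complex) \<times> (complex \<Rightarrow> complex) \<Rightarrow> bool" where
  "inHH c r m x \<longleftrightarrow> inH c r m (fst x) \<and> inH c r m (snd x)"

definition germ_eq2 :: "(nat \<Rightarrow> complex) \<Rightarrow> (nat \<Rightarrow> real) \<Rightarrow> nat \<Rightarrow> (complex \<Rightarrow> complex) \<times> (complex \<Rightarrow> complex)
   \<Rightarrow> (complex \<Rightarrow> complex) \<times> (complex \<Rightarrow> complex) \<Rightarrow> bool" where
  "germ_eq2 c r m x y \<longleftrightarrow> germ_eq c r m (fst x) (fst y) \<and> germ_eq c r m (snd x) (snd y)"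

definition lin2 :: "complex \<Rightarrow> (complex \<Rightarrow> complex) \<times> (complex \<Rightarrow> complex) \<Rightarrow> (complex \<Rightarrow> complex) \<times> (complex \<Rightarrow> complex)
   \<Rightarrow> (complex \<Rightarrow> complex) \<times> (complex \<Rightarrow> complex)" where
  "lin2 \<alpha> x y = (\<lambda>z. \<alpha> * fst x z + fst y z, \<lambda>z. \<alpha> * snd x z + snd y z)"

end

theory Submission
  imports Defs
begin

(* For x = (w, wh) put s(x) = w a' + wh ah', and split germs at the circles as f = f_+ + f_-.
  Substituting f_+ = f - f_- into the definition, the first component of x \<circ> y becomes
  w1 w2 a' - w1 s(y)_- - w2 s(x)_- and the second one
  wh1 wh2 ah' + (wh1 w2 + w1 wh2) a' - wh1 s(y)_- - wh2 s(x)_-, which is visibly symmetric and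
  linear in x.  Consequently s(x \<circ> y) = s(x)_+ s(y)_+ - s(x)_- s(y)_-.  Now (f_+ g_+)_- = 0,
  since f_+ g_+ continues holomorphically into the disks, and (f_- g_-)_+ = 0, since f_- g_- continues
  holomorphically to the exterior with a double zero at infinity, so that the Cauchy integrals over
  all circles add up to its vanishing residue at infinity.  Hence s(x \<circ> y)_- = - s(x)_- s(y)_-,
  and associativity becomes a polynomial identity. *)

lemma contour_integral_circlepath_annulus_eq:
  assumes "0 < \<rho>1" "\<rho>1 \<le> \<rho>2" "open S" "f holomorphic_on S"
    and annulus: "\<And>p. \<rho>1 \<le> norm (p - c) \<Longrightarrow> norm (p - c) \<le> \<rho>2 \<Longrightarrow> p \<in> S"
  shows "contour_integral (circlepath c \<rho>1) f = contour_integral (circlepath c \<rho>2) f"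
proof (rule Cauchy_theorem_homotopic_loops[OF _ assms(3,4)])
  show "homotopic_loops S (circlepath c \<rho>1) (circlepath c \<rho>2)"
  proof (rule homotopic_loops_linear)
    fix t :: real
    show "closed_segment (circlepath c \<rho>1 t) (circlepath c \<rho>2 t) \<subseteq> S"
    proof
      fix y assume "y \<in> closed_segment (circlepath c \<rho>1 t) (circlepath c \<rho>2 t)"
      then obtain u where u: "0 \<le> u" "u \<le> 1"
        and y: "y = (1 - u) *\<^sub>R circlepath c \<rho>1 t + u *\<^sub>R circlepath c \<rho>2 t"
        unfolding closed_segment_def by auto
      define q where "q = (1 - u) * \<rho>1 + u * \<rho>2"
      have "q - \<rho>1 = u * (\<rho>2 - \<rho>1)" "\<rho>2 - q = (1 - u) * (\<rho>2 - \<rho>1)"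
        by (simp_all add: q_def algebra_simps)
      then have q: "\<rho>1 \<le> q" "q \<le> \<rho>2"
        using u assms(2) by (metis diff_ge_0_iff_ge mult_nonneg_nonneg)+
      have "y - c = of_real q * exp (2 * of_real pi * \<i> * of_real t)"
        unfolding y circlepath q_def by (simp add: scaleR_conv_of_real algebra_simps)
      then have "norm (y - c) = q"
        using q assms(1) by (simp add: norm_mult)
      then show "y \<in> S" using annulus q by simp
    qed
  qed auto
qed auto

lemma has_contour_integral_circlepath_zero:
  assumes "g holomorphic_on ball c R" "0 < \<rho>" "\<rho> < R"
  shows "(g has_contour_integral 0) (circlepath c \<rho>)"
  using assms by (intro Cauchy_theorem_convex_simple[OF assms(1)]) auto

lemma holomorphic_on_Cauchy_integral_circlepath:
  assumes "0 < \<rho>" "continuous_on (sphere c \<rho>) f"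
  shows "(\<lambda>z. contour_integral (circlepath c \<rho>) (\<lambda>p. f p / (p - z))) holomorphic_on - sphere c \<rho>"
proof -
  have int: "((\<lambda>p. f p / (p - w) ^ 1) has_contour_integral
               contour_integral (circlepath c \<rho>) (\<lambda>p. f p / (p - w))) (circlepath c \<rho>)"
    if "w \<in> UNIV - path_image (circlepath c \<rho>)" for w
  proof -
    have "continuous_on (sphere c \<rho>) (\<lambda>p. f p / (p - w))"
      using that assms by (intro continuous_intros) auto
    then show ?thesis
      using assms(1) by (simp add: has_contour_integral_integral contour_integrable_continuous_circlepath)
  qed
  have "\<exists>f'. ((\<lambda>z. contour_integral (circlepath c \<rho>) (\<lambda>p. f p / (p - z))) has_field_derivative f') (at w)"
    if "w \<in> - sphere c \<rho>" for w
    using Cauchy_next_derivative(2)[where B = "2 * pi * \<rho>" and k = 1 and S = UNIV and w = w, OF _ _ int]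
      that assms by (auto simp: vector_derivative_circlepath norm_mult)
  then show ?thesis by (simp add: holomorphic_on_open open_Compl)
qed

lemma Cauchy_integral_formula_annulus:
  assumes "0 < \<rho>1" "\<rho>1 < norm (z - c)" "norm (z - c) < \<rho>2" "open S" "f holomorphic_on S"
    and annulus: "\<And>p. \<rho>1 \<le> norm (p - c) \<Longrightarrow> norm (p - c) \<le> \<rho>2 \<Longrightarrow> p \<in> S"
  shows "contour_integral (circlepath c \<rho>2) (\<lambda>p. f p / (p - z))
           - contour_integral (circlepath c \<rho>1) (\<lambda>p. f p / (p - z)) = 2 * of_real pi * \<i> * f z"
proof -
  define g where "g = (\<lambda>p. if p = z then deriv f z else (f p - f z) / (p - z))"
  have "z \<in> S" using annulus assms(2,3) by simp
  then have g: "g holomorphic_on S"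
    unfolding g_def using pole_lemma_open[OF assms(5,4)] by simp
  have sub: "path_image (circlepath c \<rho>) \<subseteq> S - {z}" if "\<rho> = \<rho>1 \<or> \<rho> = \<rho>2" for \<rho>
    using that annulus assms(1-3) by (auto simp: dist_norm norm_minus_commute)
  have split: "((\<lambda>p. f p / (p - z)) has_contour_integral
                 contour_integral (circlepath c \<rho>) g + f z * I) (circlepath c \<rho>)"
    if "\<rho> = \<rho>1 \<or> \<rho> = \<rho>2" and I: "((\<lambda>p. 1 / (p - z)) has_contour_integral I) (circlepath c \<rho>)"
    for \<rho> I
  proof (rule has_contour_integral_eq)
    show "((\<lambda>p. g p + f z * (1 / (p - z))) has_contour_integral
            contour_integral (circlepath c \<rho>) g + f z * I) (circlepath c \<rho>)"
      using contour_integrable_holomorphic_simple[OF g assms(4) valid_path_circlepath] sub[OF that(1)]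
      by (intro has_contour_integral_add has_contour_integral_lmul I has_contour_integral_integral) blast
    show "g p + f z * (1 / (p - z)) = f p / (p - z)" if "p \<in> path_image (circlepath c \<rho>)" for p
      using that sub[OF \<open>\<rho> = \<rho>1 \<or> \<rho> = \<rho>2\<close>] by (auto simp: g_def diff_divide_distrib)
  qed
  have "((\<lambda>p. 1 / (p - z)) has_contour_integral 2 * of_real pi * \<i> * 1) (circlepath c \<rho>2)"
    using Cauchy_integral_circlepath_simple[of "\<lambda>_. 1" c \<rho>2 z] assms(3) by simp
  note I2 = split[OF _ this]
  have "((\<lambda>p. 1 / (p - z)) has_contour_integral 0) (circlepath c \<rho>1)"
    using assms(1,2)
    by (intro has_contour_integral_circlepath_zero[where R = "norm (z - c)"] holomorphic_intros)
      (auto simp: dist_norm norm_minus_commute)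
  note I1 = split[OF _ this]
  show ?thesis
    using contour_integral_unique[OF I1] contour_integral_unique[OF I2]
      contour_integral_circlepath_annulus_eq[of \<rho>1 \<rho>2 S g c] assms annulus g
    by simp
qed

lemma Cauchy_integral_circlepath_times_bound:
  assumes "0 < \<rho>" "continuous_on (sphere c \<rho>) f" "\<And>p. p \<in> sphere c \<rho> \<Longrightarrow> norm (f p * p) \<le> B"
    and z: "norm c + \<rho> < norm z"
  shows "norm (z * contour_integral (circlepath c \<rho>) (\<lambda>p. f p / (p - z)) + contour_integral (circlepath c \<rho>) f)
           \<le> B * (2 * pi * \<rho>) / (norm z - (norm c + \<rho>))"
proof -
  define K where "K = norm c + \<rho>"
  have "c + of_real \<rho> \<in> sphere c \<rho>" using assms(1) by (simp add: dist_norm)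
  then have B: "0 \<le> B" using assms(3) by (meson norm_ge_zero order_trans)
  have far: "norm z - K \<le> norm (p - z)" if "p \<in> sphere c \<rho>" for p
    using that norm_triangle_ineq2[of z p] norm_triangle_ineq[of c "p - c"]
    by (auto simp: K_def dist_norm norm_minus_commute)
  have int: "(\<lambda>p. g p / (p - z)) contour_integrable_on circlepath c \<rho>"
    if "continuous_on (sphere c \<rho>) g" for g
    using that assms(1) far z
    by (intro contour_integrable_continuous_circlepath continuous_intros) (force simp: K_def)+
  have "contour_integral (circlepath c \<rho>) (\<lambda>p. f p * p / (p - z))
        = contour_integral (circlepath c \<rho>) (\<lambda>p. z * (f p / (p - z)) + f p)"
  proof (rule contour_integral_eq)
    fix p assume "p \<in> path_image (circlepath c \<rho>)"
    then have "p - z \<noteq> 0" using far[of p] z assms(1) by (auto simp: K_def)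
    then show "f p * p / (p - z) = z * (f p / (p - z)) + f p" by (simp add: field_simps)
  qed
  also have "\<dots> = contour_integral (circlepath c \<rho>) (\<lambda>p. z * (f p / (p - z)))
                   + contour_integral (circlepath c \<rho>) f"
    using assms(1,2) by (intro contour_integral_add contour_integrable_lmul int
        contour_integrable_continuous_circlepath) auto
  also have "contour_integral (circlepath c \<rho>) (\<lambda>p. z * (f p / (p - z)))
             = z * contour_integral (circlepath c \<rho>) (\<lambda>p. f p / (p - z))"
    by (rule contour_integral_lmul[OF int[OF assms(2)]])
  finally have "norm (z * contour_integral (circlepath c \<rho>) (\<lambda>p. f p / (p - z)) + contour_integral (circlepath c \<rho>) f)
                = norm (contour_integral (circlepath c \<rho>) (\<lambda>p. f p * p / (p - z)))" by simp
  also have "\<dots> \<le> B / (norm z - K) * (2 * pi * \<rho>)"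
  proof (rule has_contour_integral_bound_circlepath[OF has_contour_integral_integral[OF int] _ assms(1)])
    show "continuous_on (sphere c \<rho>) (\<lambda>p. f p * p)" using assms(2) by (intro continuous_intros)
    show "0 \<le> B / (norm z - K)" using B z by (simp add: K_def)
    fix p assume "norm (p - c) = \<rho>"
    then have p: "p \<in> sphere c \<rho>" by (simp add: dist_norm norm_minus_commute)
    show "norm (f p * p / (p - z)) \<le> B / (norm z - K)"
      unfolding norm_divide using assms(3)[OF p] far[OF p] z B by (intro frac_le) (auto simp: K_def)
  qed
  finally show ?thesis by (simp add: K_def)
qed

lemma tendsto_Cauchy_integral_circlepath_at_infinity:
  assumes "0 < \<rho>" "continuous_on (sphere c \<rho>) f"
  shows "((\<lambda>z. z * contour_integral (circlepath c \<rho>) (\<lambda>p. f p / (p - z)))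
           \<longlongrightarrow> - contour_integral (circlepath c \<rho>) f) at_infinity"
proof -
  define K where "K = norm c + \<rho>"
  have "bounded ((\<lambda>p. f p * p) ` sphere c \<rho>)"
    using assms(2) by (intro compact_imp_bounded compact_continuous_image continuous_intros) auto
  then obtain B where B: "\<And>p. p \<in> sphere c \<rho> \<Longrightarrow> norm (f p * p) \<le> B"
    unfolding bounded_iff by blast
  have "\<forall>\<^sub>F z in at_infinity. norm (z * contour_integral (circlepath c \<rho>) (\<lambda>p. f p / (p - z))
          - - contour_integral (circlepath c \<rho>) f) \<le> B * (2 * pi * \<rho>) / (norm z - K)"
    unfolding eventually_at_infinity K_def
    using Cauchy_integral_circlepath_times_bound[OF assms B]
    by (intro exI[of _ "norm c + \<rho> + 1"]) auto
  moreover have "LIM z at_infinity. norm (z::complex) - K :> at_infinity"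
    using filterlim_tendsto_add_at_top[OF tendsto_const filterlim_norm_at_top, of "- K"]
    by (intro filterlim_at_top_imp_at_infinity) simp
  then have "((\<lambda>z::complex. B * (2 * pi * \<rho>) / (norm z - K)) \<longlongrightarrow> 0) at_infinity"
    by (rule tendsto_divide_0[OF tendsto_const])
  ultimately show ?thesis
    by (rule Lim_null[THEN iffD2, OF Lim_null_comparison])
qed

lemma tendsto_0_at_infinity_if_times_tendsto:
  fixes F :: "complex \<Rightarrow> complex"
  assumes "((\<lambda>z. z * F z) \<longlongrightarrow> L) at_infinity"
  shows "(F \<longlongrightarrow> 0) at_infinity"
proof (rule Lim_transform_eventually)
  show "((\<lambda>z. z * F z * inverse z) \<longlongrightarrow> 0) at_infinity"
    using tendsto_mult[OF assms tendsto_inverse_0] by simp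
  show "\<forall>\<^sub>F z in at_infinity. z * F z * inverse z = F z"
    unfolding eventually_at_infinity
  proof (intro exI allI impI)
    fix z :: complex assume "1 \<le> norm z"
    then have "z \<noteq> 0" by auto
    then show "z * F z * inverse z = F z" by simp
  qed
qed

lemma tendsto_times_Cauchy_kernel_at_infinity:
  fixes h :: "complex \<Rightarrow> complex"
  assumes "((\<lambda>z. z * h z) \<longlongrightarrow> 0) at_infinity"
  shows "((\<lambda>z. z * (h z / (z - a))) \<longlongrightarrow> 0) at_infinity"
proof -
  have "filterlim (\<lambda>z. - a + z) at_infinity at_infinity"
    by (rule tendsto_add_filterlim_at_infinity[OF tendsto_const filterlim_ident])
  then have "((\<lambda>z. 1 / (z - a)) \<longlongrightarrow> 0) at_infinity"
    by (intro tendsto_divide_0[OF tendsto_const]) simp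
  from tendsto_mult[OF assms this] show ?thesis by simp
qed

lemma radial_projection_to_sphere:
  fixes p a :: "'a::real_normed_vector"
  assumes "p \<noteq> a" "0 \<le> \<rho>"
  defines "q \<equiv> a + (\<rho> / norm (p - a)) *\<^sub>R (p - a)"
  shows "q \<in> sphere a \<rho>" "dist p q = \<bar>norm (p - a) - \<rho>\<bar>"
proof -
  define n where "n = norm (p - a)"
  have n: "0 < n" using assms(1) by (simp add: n_def)
  have "q - a = (\<rho> / n) *\<^sub>R (p - a)" "p - q = (1 - \<rho> / n) *\<^sub>R (p - a)"
    by (simp_all add: q_def n_def algebra_simps)
  then have "norm (q - a) = \<rho> / n * n" "norm (p - q) = \<bar>1 - \<rho> / n\<bar> * n"
    using n assms(2) by (simp_all add: n_def[symmetric])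
  moreover have "\<bar>1 - \<rho> / n\<bar> * n = \<bar>n - \<rho>\<bar>"
  proof -
    have "(1 - \<rho> / n) * n = n - \<rho>" using n by (simp add: left_diff_distrib)
    then show ?thesis by (metis abs_mult abs_of_pos n)
  qed
  ultimately have "norm (q - a) = \<rho>" "norm (p - q) = \<bar>n - \<rho>\<bar>"
    using n by simp_all
  then show "q \<in> sphere a \<rho>" "dist p q = \<bar>norm (p - a) - \<rho>\<bar>"
    by (simp_all add: dist_norm norm_minus_commute n_def)
qed

lemma dist_gt_if_disjoint_cballs:
  fixes a b :: "'a::real_normed_vector"
  assumes "cball a \<rho> \<inter> cball b \<sigma> = {}" "0 \<le> \<rho>" "0 \<le> \<sigma>"
  shows "\<rho> + \<sigma> < dist a b"
proof (rule ccontr)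
  assume close: "\<not> \<rho> + \<sigma> < dist a b"
  show False
  proof (cases "dist a b \<le> \<rho>")
    case True
    then have "b \<in> cball a \<rho> \<inter> cball b \<sigma>" using assms(3) by simp
    with assms(1) show False by blast
  next
    case False
    then have "b \<noteq> a" using assms(2) by auto
    from radial_projection_to_sphere[OF this assms(2)] False close
    have "a + (\<rho> / norm (b - a)) *\<^sub>R (b - a) \<in> cball a \<rho> \<inter> cball b \<sigma>"
      by (auto simp: dist_norm norm_minus_commute)
    with assms(1) show False by blast
  qed
qed

lemma split_off_disk:
  assumes "0 < \<rho>" "\<rho> < R" "open \<Omega>" "F holomorphic_on \<Omega>"
    and annulus: "\<And>p. \<rho> \<le> norm (p - c) \<Longrightarrow> norm (p - c) \<le> R \<Longrightarrow> p \<in> \<Omega>"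
    and lim: "((\<lambda>z. z * F z) \<longlongrightarrow> L) at_infinity"
  obtains Fo G where "Fo holomorphic_on - sphere c \<rho>"
    and "G holomorphic_on ball c R \<union> (\<Omega> - cball c \<rho>)"
    and "\<And>z. z \<notin> ball c R \<Longrightarrow> G z = F z - Fo z"
    and "((\<lambda>z. z * G z) \<longlongrightarrow> L - contour_integral (circlepath c R) F / (2 * of_real pi * \<i>)) at_infinity"
proof
  define Fo where "Fo z = - contour_integral (circlepath c \<rho>) (\<lambda>p. F p / (p - z)) / (2 * of_real pi * \<i>)" for z
  define Fi where "Fi z = contour_integral (circlepath c R) (\<lambda>p. F p / (p - z)) / (2 * of_real pi * \<i>)" for z
  define G where "G z = (if z \<in> ball c R then Fi z else F z - Fo z)" for z
  have cont: "continuous_on (sphere c \<rho>') F" if "\<rho>' = \<rho> \<or> \<rho>' = R" for \<rho>'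
    using that assms(1,2) annulus
    by (intro holomorphic_on_imp_continuous_on holomorphic_on_subset[OF assms(4)])
      (auto simp: dist_norm norm_minus_commute)
  show Fo: "Fo holomorphic_on - sphere c \<rho>"
    unfolding Fo_def using holomorphic_on_Cauchy_integral_circlepath[OF assms(1) cont]
    by (intro holomorphic_intros) auto
  have "Fi holomorphic_on - sphere c R"
    unfolding Fi_def using holomorphic_on_Cauchy_integral_circlepath[OF _ cont] assms(1,2)
    by (intro holomorphic_intros) auto
  then have Fi: "Fi holomorphic_on ball c R"
    by (rule holomorphic_on_subset) auto
  have "(\<lambda>z. F z - Fo z) holomorphic_on \<Omega> - cball c \<rho>"
    using assms(4) Fo by (intro holomorphic_intros) (auto intro: holomorphic_on_subset)
  moreover have "Fi z = F z - Fo z" if "z \<in> ball c R" "z \<in> \<Omega> - cball c \<rho>" for z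
    using Cauchy_integral_formula_annulus[of \<rho> z c R \<Omega> F] assms annulus that
    by (simp add: Fi_def Fo_def dist_norm norm_minus_commute field_simps)
  ultimately show "G holomorphic_on ball c R \<union> (\<Omega> - cball c \<rho>)"
    unfolding G_def using Fi assms(3) by (intro holomorphic_on_If_Un) auto
  show "G z = F z - Fo z" if "z \<notin> ball c R" for z
    using that by (simp add: G_def)
  have "((\<lambda>z. z * Fo z) \<longlongrightarrow> contour_integral (circlepath c \<rho>) F / (2 * of_real pi * \<i>)) at_infinity"
    using tendsto_divide[OF tendsto_minus[OF tendsto_Cauchy_integral_circlepath_at_infinity[OF assms(1) cont]]
        tendsto_const, of "2 * of_real pi * \<i>"]
    by (simp add: Fo_def)
  moreover have "contour_integral (circlepath c \<rho>) F = contour_integral (circlepath c R) F"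
    using contour_integral_circlepath_annulus_eq[of \<rho> R \<Omega> F c] assms annulus by simp
  ultimately have "((\<lambda>z. z * F z - z * Fo z) \<longlongrightarrow> L - contour_integral (circlepath c R) F / (2 * of_real pi * \<i>)) at_infinity"
    by (intro tendsto_diff lim) simp
  moreover have "\<forall>\<^sub>F z in at_infinity. z * F z - z * Fo z = z * G z"
    unfolding eventually_at_infinity
  proof (intro exI allI impI)
    fix z :: complex assume "norm c + R \<le> norm z"
    then have "z \<notin> ball c R" using norm_triangle_ineq2[of z c] by (auto simp: dist_norm norm_minus_commute)
    then show "z * F z - z * Fo z = z * G z" by (simp add: G_def algebra_simps)
  qed
  ultimately show "((\<lambda>z. z * G z) \<longlongrightarrow> L - contour_integral (circlepath c R) F / (2 * of_real pi * \<i>)) at_infinity"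
    by (rule Lim_transform_eventually)
qed

lemma contour_integral_circlepath_subtract_far_holomorphic:
  assumes "0 < r'" "r' + \<rho> < dist c' c" "Fo holomorphic_on - sphere c \<rho>"
    and "F contour_integrable_on circlepath c' r'"
    and "\<And>z. z \<in> sphere c' r' \<Longrightarrow> G z = F z - Fo z"
  shows "contour_integral (circlepath c' r') G = contour_integral (circlepath c' r') F"
proof -
  have ball: "ball c' (dist c' c - \<rho>) \<subseteq> - sphere c \<rho>"
  proof
    fix p assume "p \<in> ball c' (dist c' c - \<rho>)"
    then show "p \<in> - sphere c \<rho>" using dist_triangle[of c' c p] by (auto simp: dist_commute)
  qed
  have Fo: "(Fo has_contour_integral 0) (circlepath c' r')"
    using assms(1,2)
    by (intro has_contour_integral_circlepath_zero[where R = "dist c' c - \<rho>"] holomorphic_on_subset[OF assms(3) ball])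
      auto
  have "contour_integral (circlepath c' r') G = contour_integral (circlepath c' r') (\<lambda>z. F z - Fo z)"
    using assms(1,5) by (intro contour_integral_eq) auto
  also have "\<dots> = contour_integral (circlepath c' r') F"
    using contour_integral_diff[OF assms(4) has_contour_integral_integrable[OF Fo]]
      contour_integral_unique[OF Fo] by simp
  finally show ?thesis .
qed

lemma sphere_disjoint_from_shrunk_cballs:
  assumes "s \<in> S" "\<And>t. t \<in> S \<Longrightarrow> \<rho> t < r t"
    and "\<And>t. t \<in> S \<Longrightarrow> t \<noteq> s \<Longrightarrow> cball (c s) (r s) \<inter> cball (c t) (r t) = {}"
  shows "sphere (c s) (r s) \<inter> (\<Union>t\<in>S. cball (c t) (\<rho> t)) = {}"
proof -
  have "sphere (c s) (r s) \<inter> cball (c t) (\<rho> t) = {}" if t: "t \<in> S" for t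
  proof (cases "t = s")
    case False
    have "cball (c t) (\<rho> t) \<subseteq> cball (c t) (r t)" using assms(2)[OF t] by auto
    moreover have "sphere (c s) (r s) \<subseteq> cball (c s) (r s)" by auto
    ultimately show ?thesis using assms(3)[OF t False] by blast
  qed (use assms(2)[OF assms(1)] in auto)
  then show ?thesis by blast
qed

lemma entire_times_tendsto_at_infinity_imp_0:
  assumes "F holomorphic_on UNIV" "((\<lambda>z. z * F z) \<longlongrightarrow> L) at_infinity"
  shows "L = 0"
proof -
  have "F z = 0" for z
    using Liouville_weak[OF assms(1) tendsto_0_at_infinity_if_times_tendsto[OF assms(2)]] by simp
  then have "((\<lambda>z. z * F z) \<longlongrightarrow> 0) at_infinity" by simp
  then show ?thesis using assms(2) tendsto_unique[OF trivial_limit_at_infinity] by force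
qed

lemma sum_circlepath_integrals_eq_limit_at_infinity:
  fixes c :: "'i \<Rightarrow> complex" and r \<rho> :: "'i \<Rightarrow> real"
  assumes "finite S"
    and "\<And>s. s \<in> S \<Longrightarrow> 0 < \<rho> s \<and> \<rho> s < r s"
    and "\<And>s t. s \<in> S \<Longrightarrow> t \<in> S \<Longrightarrow> s \<noteq> t \<Longrightarrow> cball (c s) (r s) \<inter> cball (c t) (r t) = {}"
    and "F holomorphic_on - (\<Union>s\<in>S. cball (c s) (\<rho> s))"
    and "((\<lambda>z. z * F z) \<longlongrightarrow> L) at_infinity"
  shows "(\<Sum>s\<in>S. contour_integral (circlepath (c s) (r s)) F) = 2 * of_real pi * \<i> * L"
  using assms
proof (induction S arbitrary: F L rule: finite_induct)
  case empty
  then show ?case using entire_times_tendsto_at_infinity_imp_0 by simp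
next
  case (insert k S)
  note radii = insert.prems(1) and disj = insert.prems(2)
  define \<rho>' where "\<rho>' = (\<rho> k + r k) / 2"
  have \<rho>': "\<rho> k < \<rho>'" "\<rho>' < r k" "0 < \<rho>'" using radii[of k] by (auto simp: \<rho>'_def)
  define \<Omega> where "\<Omega> = - (\<Union>s\<in>insert k S. cball (c s) (\<rho> s))"
  have F: "F holomorphic_on \<Omega>" using insert.prems(3) unfolding \<Omega>_def .
  have open_\<Omega>: "open \<Omega>" unfolding \<Omega>_def using insert.hyps(1) by (intro open_Compl closed_UN) auto
  have annulus: "p \<in> \<Omega>" if "\<rho>' \<le> norm (p - c k)" "norm (p - c k) \<le> r k" for p
  proof -
    have "p \<notin> cball (c s) (\<rho> s)" if s: "s \<in> S" for s
    proof -
      have "cball (c s) (\<rho> s) \<subseteq> cball (c s) (r s)" using radii[of s] s by auto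
      moreover have "p \<in> cball (c k) (r k)" using \<open>norm (p - c k) \<le> r k\<close> by (simp add: dist_norm norm_minus_commute)
      ultimately show ?thesis using disj[of s k] s insert.hyps(2) by blast
    qed
    then show ?thesis using that \<rho>' unfolding \<Omega>_def by (auto simp: dist_norm norm_minus_commute)
  qed
  obtain Fo G where Fo: "Fo holomorphic_on - sphere (c k) \<rho>'"
    and G: "G holomorphic_on ball (c k) (r k) \<union> (\<Omega> - cball (c k) \<rho>')"
    and G_outside: "\<And>z. z \<notin> ball (c k) (r k) \<Longrightarrow> G z = F z - Fo z"
    and G_lim: "((\<lambda>z. z * G z)
                  \<longlongrightarrow> L - contour_integral (circlepath (c k) (r k)) F / (2 * of_real pi * \<i>)) at_infinity"
    using split_off_disk[OF \<rho>'(3,2) open_\<Omega> F annulus insert.prems(4)] by blast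
  have "- (\<Union>s\<in>S. cball (c s) (\<rho> s)) \<subseteq> ball (c k) (r k) \<union> (\<Omega> - cball (c k) \<rho>')"
    using \<rho>' unfolding \<Omega>_def by auto
  then have IH: "(\<Sum>s\<in>S. contour_integral (circlepath (c s) (r s)) G)
                 = 2 * of_real pi * \<i> * L - contour_integral (circlepath (c k) (r k)) F"
    using insert.IH[OF _ _ holomorphic_on_subset[OF G] G_lim] radii disj
    by (simp add: right_diff_distrib)
  have "contour_integral (circlepath (c s) (r s)) G = contour_integral (circlepath (c s) (r s)) F"
    if s: "s \<in> S" for s
  proof (rule contour_integral_circlepath_subtract_far_holomorphic[OF _ _ Fo])
    have "s \<noteq> k" using s insert.hyps(2) by auto
    have "sphere (c s) (r s) \<inter> (\<Union>t\<in>insert k S. cball (c t) (\<rho> t)) = {}"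
      using s radii disj by (intro sphere_disjoint_from_shrunk_cballs) auto
    moreover have "sphere (c s) (r s) \<inter> ball (c k) (r k) = {}"
    proof -
      have "sphere (c s) (r s) \<subseteq> cball (c s) (r s)" "ball (c k) (r k) \<subseteq> cball (c k) (r k)" by auto
      then show ?thesis using disj[of s k] s \<open>s \<noteq> k\<close> by blast
    qed
    ultimately have sphere_s: "sphere (c s) (r s) \<subseteq> \<Omega> - ball (c k) (r k)"
      unfolding \<Omega>_def by blast
    show "0 < r s" using radii[of s] s by auto
    then show "F contour_integrable_on circlepath (c s) (r s)"
      using sphere_s open_\<Omega> by (intro contour_integrable_holomorphic_simple[OF F]) auto
    show "r s + \<rho>' < dist (c s) (c k)"
      using dist_gt_if_disjoint_cballs[OF disj[of s k]] s \<open>s \<noteq> k\<close> radii[of s] radii[of k] \<rho>' by auto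
    show "G z = F z - Fo z" if "z \<in> sphere (c s) (r s)" for z
      using that sphere_s G_outside by blast
  qed
  then show ?case
    using IH insert.hyps by (simp add: algebra_simps)
qed

definition circles_nhds :: "(nat \<Rightarrow> complex) \<Rightarrow> (nat \<Rightarrow> real) \<Rightarrow> nat \<Rightarrow> complex filter" where
  "circles_nhds c r m = (SUP z\<in>circles c r m. nhds z)"

lemma eventually_circles_nhds_iff_nhds:
  "eventually P (circles_nhds c r m) \<longleftrightarrow> (\<forall>z\<in>circles c r m. eventually P (nhds z))"
  by (simp add: circles_nhds_def eventually_Sup)

lemma eventually_circles_nhds:
  "eventually P (circles_nhds c r m) \<longleftrightarrow> (\<exists>U. open U \<and> circles c r m \<subseteq> U \<and> (\<forall>z\<in>U. P z))"
proof
  assume "eventually P (circles_nhds c r m)"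
  then have "\<forall>z\<in>circles c r m. \<exists>U. open U \<and> z \<in> U \<and> (\<forall>y\<in>U. P y)"
    by (simp add: eventually_circles_nhds_iff_nhds eventually_nhds)
  then obtain U where "\<And>z. z \<in> circles c r m \<Longrightarrow> open (U z) \<and> z \<in> U z \<and> (\<forall>y\<in>U z. P y)"
    by metis
  then show "\<exists>U. open U \<and> circles c r m \<subseteq> U \<and> (\<forall>z\<in>U. P z)"
    by (intro exI[of _ "\<Union>z\<in>circles c r m. U z"]) auto
qed (auto simp: eventually_circles_nhds_iff_nhds eventually_nhds)

lemma germ_eq_iff_eventually:
  "germ_eq c r m f g \<longleftrightarrow> (\<forall>\<^sub>F z in circles_nhds c r m. f z = g z)"
  by (simp add: germ_eq_def eventually_circles_nhds)

lemma germ_eq2_iff_eventually: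
  "germ_eq2 c r m x y \<longleftrightarrow> (\<forall>\<^sub>F z in circles_nhds c r m. fst x z = fst y z \<and> snd x z = snd y z)"
  by (simp add: germ_eq2_def germ_eq_iff_eventually eventually_conj_iff)

lemma inH_holomorphic_binop:
  assumes "inH c r m f" "inH c r m g"
    and "\<And>U. f holomorphic_on U \<Longrightarrow> g holomorphic_on U \<Longrightarrow> h holomorphic_on U"
  shows "inH c r m h"
proof -
  obtain U V where "open U" "circles c r m \<subseteq> U" "f holomorphic_on U"
    and "open V" "circles c r m \<subseteq> V" "g holomorphic_on V"
    using assms(1,2) unfolding inH_def by blast
  then show ?thesis
    unfolding inH_def using assms(3)[of "U \<inter> V"]
    by (intro exI[of _ "U \<inter> V"]) (auto intro: holomorphic_on_subset)
qed

lemma inH_const: "inH c r m (\<lambda>_. k)"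
  unfolding inH_def by (intro exI[of _ UNIV]) auto

lemma inH_minus: "inH c r m f \<Longrightarrow> inH c r m (\<lambda>z. - f z)"
  unfolding inH_def by (auto intro: holomorphic_intros)

lemma inH_add: "inH c r m f \<Longrightarrow> inH c r m g \<Longrightarrow> inH c r m (\<lambda>z. f z + g z)"
  by (rule inH_holomorphic_binop[of c r m f g]) (auto intro: holomorphic_intros)

lemma inH_diff: "inH c r m f \<Longrightarrow> inH c r m g \<Longrightarrow> inH c r m (\<lambda>z. f z - g z)"
  by (rule inH_holomorphic_binop[of c r m f g]) (auto intro: holomorphic_intros)

lemma inH_mult: "inH c r m f \<Longrightarrow> inH c r m g \<Longrightarrow> inH c r m (\<lambda>z. f z * g z)"
  by (rule inH_holomorphic_binop[of c r m f g]) (auto intro: holomorphic_intros)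

lemma inH_deriv: "inH c r m f \<Longrightarrow> inH c r m (deriv f)"
  unfolding inH_def by (auto intro: holomorphic_deriv)

lemma eventually_eq_if_eventually_eq_on:
  assumes "inH c r m g1" "inH c r m g2" "\<And>z. z \<in> circles c r m \<Longrightarrow> z islimpt D"
    and "\<forall>\<^sub>F z in circles_nhds c r m. z \<in> D \<longrightarrow> g1 z = g2 z"
  shows "\<forall>\<^sub>F z in circles_nhds c r m. g1 z = g2 z"
  unfolding eventually_circles_nhds_iff_nhds
proof
  fix z0 assume z0: "z0 \<in> circles c r m"
  obtain U1 U2 V where U: "open U1" "circles c r m \<subseteq> U1" "g1 holomorphic_on U1"
    "open U2" "circles c r m \<subseteq> U2" "g2 holomorphic_on U2"
    and V: "open V" "circles c r m \<subseteq> V" "\<forall>z\<in>V. z \<in> D \<longrightarrow> g1 z = g2 z"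
    using assms(1,2,4) unfolding inH_def eventually_circles_nhds by blast
  obtain e where e: "e > 0" "ball z0 e \<subseteq> U1 \<inter> U2 \<inter> V"
    using open_contains_ball[of "U1 \<inter> U2 \<inter> V"] U V z0 by blast
  have "\<forall>\<^sub>F y in at z0. y \<in> ball z0 e"
    using e(1) by (auto simp: eventually_at dist_commute)
  then have "z0 islimpt D \<inter> ball z0 e"
    by (rule islimpt_Int_eventually[OF assms(3)[OF z0]])
  moreover have "(\<lambda>w. g1 w - g2 w) holomorphic_on ball z0 e"
    using e U by (intro holomorphic_intros) (auto intro: holomorphic_on_subset)
  ultimately have "g1 w - g2 w = 0" if "w \<in> ball z0 e" for w
    using analytic_continuation[of "\<lambda>w. g1 w - g2 w" "ball z0 e" "D \<inter> ball z0 e" z0 w] that e V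
    by (force simp: subset_iff)
  then show "\<forall>\<^sub>F z in nhds z0. g1 z = g2 z"
    unfolding eventually_nhds using e by (intro exI[of _ "ball z0 e"]) auto
qed

locale disjoint_disks =
  fixes c :: "nat \<Rightarrow> complex" and r :: "nat \<Rightarrow> real" and m :: nat
  assumes r_pos: "\<And>i. i \<in> {1..m} \<Longrightarrow> 0 < r i"
    and disjoint: "\<And>i j. i \<in> {1..m} \<Longrightarrow> j \<in> {1..m} \<Longrightarrow> i \<noteq> j \<Longrightarrow> cball (c i) (r i) \<inter> cball (c j) (r j) = {}"
begin

lemma sphere_subset_circles: "s \<in> {1..m} \<Longrightarrow> sphere (c s) (r s) \<subseteq> circles c r m"
  unfolding circles_def by auto

lemma circlesE:
  assumes "z \<in> circles c r m"
  obtains j where "j \<in> {1..m}" "dist (c j) z = r j"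
  using assms unfolding circles_def by auto

lemma notin_circles_if_Dext: "z \<in> Dext c r m \<Longrightarrow> z \<notin> circles c r m"
  unfolding Dext_def circles_def by auto

lemma islimpt_Dint:
  assumes "z \<in> circles c r m"
  shows "z islimpt Dint c r m"
proof -
  obtain j where j: "j \<in> {1..m}" "dist (c j) z = r j" using assms by (rule circlesE)
  then have "z islimpt ball (c j) (r j)" using r_pos[of j] by (simp add: islimpt_ball)
  then show ?thesis by (rule islimpt_subset) (use j(1) in \<open>auto simp: Dint_def\<close>)
qed

lemma islimpt_Dext:
  assumes "z \<in> circles c r m"
  shows "z islimpt Dext c r m"
proof -
  obtain j where j: "j \<in> {1..m}" "dist (c j) z = r j" using assms by (rule circlesE)
  define W where "W = - (\<Union>s\<in>{1..m} - {j}. cball (c s) (r s))"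
  have "z \<in> cball (c j) (r j)" using j by simp
  then have "z \<notin> cball (c s) (r s)" if "s \<in> {1..m} - {j}" for s
    using disjoint[of j s] j that by blast
  then have "z \<in> W" unfolding W_def by blast
  moreover have "open W" unfolding W_def by (intro open_Compl closed_UN) auto
  ultimately have "\<forall>\<^sub>F y in at z. y \<in> W" by (simp add: eventually_at_topological) blast
  moreover have "z islimpt - cball (c j) (r j)"
  proof -
    have "- cball (c j) (r j) - {z} = - cball (c j) (r j)" using j by auto
    then show ?thesis using j by (simp add: islimpt_in_closure closure_complement)
  qed
  ultimately have "z islimpt - cball (c j) (r j) \<inter> W" by (intro islimpt_Int_eventually)
  also have "- cball (c j) (r j) \<inter> W = Dext c r m" unfolding W_def Dext_def using j(1) by auto
  finally show ?thesis .
qed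

definition admissible_width :: "complex set \<Rightarrow> real \<Rightarrow> bool" where
  "admissible_width U \<delta> \<longleftrightarrow> 0 < \<delta>
     \<and> (\<forall>s\<in>{1..m}. 2 * \<delta> < r s
          \<and> (\<forall>p. r s - 2 * \<delta> \<le> norm (p - c s) \<and> norm (p - c s) \<le> r s + 2 * \<delta> \<longrightarrow> p \<in> U))
     \<and> (\<forall>s\<in>{1..m}. \<forall>t\<in>{1..m}. s \<noteq> t \<longrightarrow> r s + r t + 4 * \<delta> < dist (c s) (c t))"

lemma eventually_admissible_width:
  assumes "open U" "circles c r m \<subseteq> U"
  shows "\<forall>\<^sub>F \<delta> in at_right 0. admissible_width U \<delta>"
proof -
  have "compact (circles c r m)" unfolding circles_def by (intro compact_UN) auto
  then obtain \<epsilon> where \<epsilon>: "\<epsilon> > 0" "(\<Union>x\<in>circles c r m. ball x \<epsilon>) \<subseteq> U"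
    using compact_subset_open_imp_ball_epsilon_subset assms by blast
  have small: "\<forall>\<^sub>F \<delta> in at_right 0. k * \<delta> < a" if "0 < a" for k a :: real
    using order_tendstoD(2)[OF tendsto_mult_right_zero[OF tendsto_ident_at], of a k] that by simp
  have "\<forall>\<^sub>F \<delta> in at_right 0. \<forall>s\<in>{1..m}. \<forall>t\<in>{1..m}. s \<noteq> t \<longrightarrow> r s + r t + 4 * \<delta> < dist (c s) (c t)"
  proof (intro eventually_ball_finite ballI)
    fix s t assume "s \<in> {1..m}" "t \<in> {1..m}"
    then have "s \<noteq> t \<Longrightarrow> 0 < dist (c s) (c t) - r s - r t"
      using dist_gt_if_disjoint_cballs[OF disjoint, of s t] r_pos[of s] r_pos[of t] by auto
    from small[OF this, of 4]
    show "\<forall>\<^sub>F \<delta> in at_right 0. s \<noteq> t \<longrightarrow> r s + r t + 4 * \<delta> < dist (c s) (c t)"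
      by (cases "s = t") (auto elim: eventually_mono)
  qed auto
  moreover have "\<forall>\<^sub>F \<delta> in at_right 0. \<forall>s\<in>{1..m}. 2 * \<delta> < r s"
    using r_pos by (intro eventually_ball_finite ballI small) auto
  moreover have "\<forall>\<^sub>F \<delta> in at_right 0. 0 < \<delta> \<and> 2 * \<delta> < \<epsilon>"
    using eventually_at_right_less small[OF \<epsilon>(1)] by (rule eventually_conj)
  ultimately show ?thesis
  proof eventually_elim
    case (elim \<delta>)
    have "p \<in> U" if s: "s \<in> {1..m}" and p: "r s - 2 * \<delta> \<le> norm (p - c s)" "norm (p - c s) \<le> r s + 2 * \<delta>"
      for s p
    proof -
      define q where "q = c s + (r s / norm (p - c s)) *\<^sub>R (p - c s)"
      have "2 * \<delta> < r s" using elim(2) s by blast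
      then have "p \<noteq> c s" using p by auto
      then have "q \<in> circles c r m" "dist p q < \<epsilon>"
        using radial_projection_to_sphere[of p "c s" "r s"] r_pos[OF s] p elim(3) s
        unfolding q_def circles_def by (auto simp: dist_commute)
      then have "p \<in> (\<Union>x\<in>circles c r m. ball x \<epsilon>)" by (auto simp: dist_commute)
      then show ?thesis using \<epsilon>(2) by blast
    qed
    then show ?case using elim unfolding admissible_width_def by auto
  qed
qed

lemma admissible_widthD:
  assumes "admissible_width U \<delta>"
  shows "0 < \<delta>" "s \<in> {1..m} \<Longrightarrow> 2 * \<delta> < r s"
    and "s \<in> {1..m} \<Longrightarrow> r s - 2 * \<delta> \<le> norm (p - c s) \<Longrightarrow> norm (p - c s) \<le> r s + 2 * \<delta> \<Longrightarrow> p \<in> U"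
    and "s \<in> {1..m} \<Longrightarrow> t \<in> {1..m} \<Longrightarrow> s \<noteq> t \<Longrightarrow> r s + r t + 4 * \<delta> < dist (c s) (c t)"
  using assms unfolding admissible_width_def by auto

lemma admissible_width_far_from_other_disks:
  assumes "admissible_width U \<delta>" "s \<in> {1..m}" "j \<in> {1..m}" "s \<noteq> j" "norm (z - c j) < r j + a"
  shows "r s + 4 * \<delta> - a < norm (z - c s)"
  using admissible_widthD(4)[OF assms(1-4)] assms(5) dist_triangle[of "c s" "c j" z]
  by (simp add: dist_norm norm_minus_commute)

lemma eventually_near_some_circle:
  assumes "0 < \<delta>"
  shows "\<forall>\<^sub>F z in circles_nhds c r m. \<exists>j\<in>{1..m}. \<bar>norm (z - c j) - r j\<bar> < \<delta>"
  unfolding eventually_circles_nhds_iff_nhds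
proof
  fix z0 assume "z0 \<in> circles c r m"
  then obtain j where j: "j \<in> {1..m}" "dist (c j) z0 = r j" by (rule circlesE)
  have "open {z. \<bar>norm (z - c j) - r j\<bar> < \<delta>}"
    by (intro open_Collect_less continuous_intros)
  then show "\<forall>\<^sub>F z in nhds z0. \<exists>j\<in>{1..m}. \<bar>norm (z - c j) - r j\<bar> < \<delta>"
    unfolding eventually_nhds using j assms by (intro exI[of _ "{z. \<bar>norm (z - c j) - r j\<bar> < \<delta>}"])
      (auto simp: dist_norm norm_minus_commute)
qed

(* On the circles pushed outwards (e > 0) or inwards (e < 0) the Cauchy sum is holomorphic across
  the original circles; for e = \<delta> and e = - \<delta> it represents f_+ and - f_-. *)
definition shifted_cauchy_sum :: "(complex \<Rightarrow> complex) \<Rightarrow> real \<Rightarrow> complex \<Rightarrow> complex" where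
  "shifted_cauchy_sum f e z = (1 / (2 * of_real pi * \<i>))
     * (\<Sum>s=1..m. contour_integral (circlepath (c s) (r s + e)) (\<lambda>p. f p / (p - z)))"

lemma cauchy_sum_eq_shifted_cauchy_sum_0: "cauchy_sum c r m f z = shifted_cauchy_sum f 0 z"
  by (simp add: cauchy_sum_def shifted_cauchy_sum_def)

context
  fixes U \<delta> f
  assumes U: "open U" and f: "f holomorphic_on U" and \<delta>: "admissible_width U \<delta>"
begin

lemma shifted_sphere_subset:
  assumes "s \<in> {1..m}" "\<bar>e\<bar> \<le> \<delta>"
  shows "sphere (c s) (r s + e) \<subseteq> U"
  using admissible_widthD(1)[OF \<delta>] admissible_widthD(3)[OF \<delta> assms(1)] assms(2) by (auto simp: dist_norm norm_minus_commute)

lemma shifted_radius_pos: "s \<in> {1..m} \<Longrightarrow> \<bar>e\<bar> \<le> \<delta> \<Longrightarrow> 0 < r s + e"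
  using admissible_widthD(1)[OF \<delta>] admissible_widthD(2)[OF \<delta>, of s] by linarith

lemma holomorphic_on_shifted_cauchy_sum:
  assumes "\<bar>e\<bar> \<le> \<delta>"
  shows "shifted_cauchy_sum f e holomorphic_on - (\<Union>s\<in>{1..m}. sphere (c s) (r s + e))"
proof -
  have "(\<lambda>z. contour_integral (circlepath (c s) (r s + e)) (\<lambda>p. f p / (p - z)))
          holomorphic_on - (\<Union>s\<in>{1..m}. sphere (c s) (r s + e))" if s: "s \<in> {1..m}" for s
  proof (rule holomorphic_on_subset[OF holomorphic_on_Cauchy_integral_circlepath])
    show "continuous_on (sphere (c s) (r s + e)) f"
      using shifted_sphere_subset[OF s assms] f
      by (blast intro: holomorphic_on_imp_continuous_on holomorphic_on_subset)
  qed (use shifted_radius_pos[OF s assms] s in auto)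
  then show ?thesis unfolding shifted_cauchy_sum_def by (intro holomorphic_intros)
qed

lemma circles_subset_compl_shifted_spheres:
  assumes "0 < \<bar>e\<bar>" "\<bar>e\<bar> \<le> \<delta>"
  shows "circles c r m \<subseteq> - (\<Union>s\<in>{1..m}. sphere (c s) (r s + e))"
proof
  fix z assume "z \<in> circles c r m"
  then obtain j where j: "j \<in> {1..m}" "norm (z - c j) = r j"
    by (auto elim: circlesE simp: dist_norm norm_minus_commute)
  have "norm (z - c s) \<noteq> r s + e" if s: "s \<in> {1..m}" for s
    using admissible_width_far_from_other_disks[OF \<delta> s j(1), of z \<delta>] j assms
      admissible_widthD(1)[OF \<delta>] by (cases "s = j") auto
  then show "z \<in> - (\<Union>s\<in>{1..m}. sphere (c s) (r s + e))"
    by (auto simp: dist_norm norm_minus_commute)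
qed

lemma inH_shifted_cauchy_sum: "0 < \<bar>e\<bar> \<Longrightarrow> \<bar>e\<bar> \<le> \<delta> \<Longrightarrow> inH c r m (shifted_cauchy_sum f e)"
  unfolding inH_def
  by (intro exI[of _ "- (\<Union>s\<in>{1..m}. sphere (c s) (r s + e))"] conjI open_Compl closed_UN
      circles_subset_compl_shifted_spheres holomorphic_on_shifted_cauchy_sum) auto

lemma shifted_circle_integral_eq:
  assumes s: "s \<in> {1..m}" and "\<bar>e1\<bar> \<le> \<delta>" "\<bar>e2\<bar> \<le> \<delta>" "e1 \<le> e2"
    and off: "\<not> (r s + e1 \<le> norm (z - c s) \<and> norm (z - c s) \<le> r s + e2)"
  shows "contour_integral (circlepath (c s) (r s + e1)) (\<lambda>p. f p / (p - z))
         = contour_integral (circlepath (c s) (r s + e2)) (\<lambda>p. f p / (p - z))"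
proof (rule contour_integral_circlepath_annulus_eq)
  show "(\<lambda>p. f p / (p - z)) holomorphic_on U - {z}"
    using f by (intro holomorphic_intros) (auto intro: holomorphic_on_subset)
  show "p \<in> U - {z}" if "r s + e1 \<le> norm (p - c s)" "norm (p - c s) \<le> r s + e2" for p
    using that off admissible_widthD(3)[OF \<delta> s, of p] assms(2,3) by auto
qed (use U shifted_radius_pos[OF s assms(2)] assms(4) in auto)

lemma shifted_cauchy_sum_eq_cauchy_sum_inside:
  assumes "z \<in> Dint c r m"
  shows "shifted_cauchy_sum f \<delta> z = cauchy_sum c r m f z"
proof -
  obtain j where j: "j \<in> {1..m}" "norm (z - c j) < r j"
    using assms unfolding Dint_def by (auto simp: dist_norm norm_minus_commute)
  have "\<not> (r s + 0 \<le> norm (z - c s) \<and> norm (z - c s) \<le> r s + \<delta>)" if s: "s \<in> {1..m}" for s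
    using admissible_width_far_from_other_disks[OF \<delta> s j(1), of z 0] j admissible_widthD(1)[OF \<delta>]
    by (cases "s = j") auto
  then show ?thesis
    using shifted_circle_integral_eq[of _ 0 \<delta> z] admissible_widthD(1)[OF \<delta>]
    by (simp add: cauchy_sum_eq_shifted_cauchy_sum_0 shifted_cauchy_sum_def)
qed

lemma shifted_cauchy_sum_eq_cauchy_sum_outside:
  assumes "z \<in> Dext c r m"
  shows "shifted_cauchy_sum f (- \<delta>) z = cauchy_sum c r m f z"
proof -
  have "\<not> (r s + - \<delta> \<le> norm (z - c s) \<and> norm (z - c s) \<le> r s + 0)" if "s \<in> {1..m}" for s
    using assms that unfolding Dext_def by (auto simp: dist_norm norm_minus_commute)
  then show ?thesis
    using shifted_circle_integral_eq[of _ "- \<delta>" 0 z] admissible_widthD(1)[OF \<delta>]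
    by (simp add: cauchy_sum_eq_shifted_cauchy_sum_0 shifted_cauchy_sum_def)
qed

lemma shifted_cauchy_sum_jump:
  assumes j: "j \<in> {1..m}" "\<bar>norm (z - c j) - r j\<bar> < \<delta>"
  shows "shifted_cauchy_sum f \<delta> z - shifted_cauchy_sum f (- \<delta>) z = f z"
proof -
  have "contour_integral (circlepath (c s) (r s + \<delta>)) (\<lambda>p. f p / (p - z))
          - contour_integral (circlepath (c s) (r s + - \<delta>)) (\<lambda>p. f p / (p - z))
        = (if s = j then 2 * of_real pi * \<i> * f z else 0)" if s: "s \<in> {1..m}" for s
  proof (cases "s = j")
    case True
    have "p \<in> U" if "r j - \<delta> \<le> norm (p - c j)" "norm (p - c j) \<le> r j + \<delta>" for p
      using that admissible_widthD(1)[OF \<delta>] admissible_widthD(3)[OF \<delta> j(1)] by auto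
    then show ?thesis
      using Cauchy_integral_formula_annulus[of "r j - \<delta>" z "c j" "r j + \<delta>" U f] True j U f
        shifted_radius_pos[OF j(1), of "- \<delta>"] admissible_widthD(1)[OF \<delta>]
      by (simp add: abs_less_iff)
  next
    case False
    then have "\<not> (r s + - \<delta> \<le> norm (z - c s) \<and> norm (z - c s) \<le> r s + \<delta>)"
      using admissible_width_far_from_other_disks[OF \<delta> s j(1), of z \<delta>] j by linarith
    then show ?thesis
      using shifted_circle_integral_eq[OF s, of "- \<delta>" \<delta> z] False admissible_widthD(1)[OF \<delta>] by simp
  qed
  then have "(\<Sum>s=1..m. contour_integral (circlepath (c s) (r s + \<delta>)) (\<lambda>p. f p / (p - z)))
           - (\<Sum>s=1..m. contour_integral (circlepath (c s) (r s + - \<delta>)) (\<lambda>p. f p / (p - z)))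
           = 2 * of_real pi * \<i> * f z"
    using j(1) by (simp only: sum_subtractf[symmetric] sum.delta') simp
  then show ?thesis
    unfolding shifted_cauchy_sum_def right_diff_distrib[symmetric] by simp
qed

lemma tendsto_times_shifted_cauchy_sum:
  assumes "\<bar>e\<bar> \<le> \<delta>"
  obtains L where "((\<lambda>z. z * shifted_cauchy_sum f e z) \<longlongrightarrow> L) at_infinity"
proof
  have "((\<lambda>z. z * contour_integral (circlepath (c s) (r s + e)) (\<lambda>p. f p / (p - z)))
          \<longlongrightarrow> - contour_integral (circlepath (c s) (r s + e)) f) at_infinity" if s: "s \<in> {1..m}" for s
    using shifted_radius_pos[OF s assms] shifted_sphere_subset[OF s assms] f
    by (intro tendsto_Cauchy_integral_circlepath_at_infinity)
      (auto intro: holomorphic_on_imp_continuous_on holomorphic_on_subset)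
  then have "((\<lambda>z. (1 / (2 * of_real pi * \<i>)) * (\<Sum>s=1..m. z * contour_integral (circlepath (c s) (r s + e)) (\<lambda>p. f p / (p - z))))
      \<longlongrightarrow> (1 / (2 * of_real pi * \<i>)) * (\<Sum>s=1..m. - contour_integral (circlepath (c s) (r s + e)) f)) at_infinity"
    by (intro tendsto_mult_left tendsto_sum) auto
  then show "((\<lambda>z. z * shifted_cauchy_sum f e z)
      \<longlongrightarrow> (1 / (2 * of_real pi * \<i>)) * (\<Sum>s=1..m. - contour_integral (circlepath (c s) (r s + e)) f)) at_infinity"
    by (simp add: shifted_cauchy_sum_def sum_distrib_left mult.left_commute)
qed

end

lemma circles_subset_if_admissible_width: "admissible_width U \<delta> \<Longrightarrow> circles c r m \<subseteq> U"
  unfolding circles_def using admissible_widthD(1,3) by (fastforce simp: dist_norm norm_minus_commute)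

lemma enlarged_disks_subset_compl_shifted_spheres:
  assumes "admissible_width U \<delta>"
  shows "(\<Union>j\<in>{1..m}. ball (c j) (r j + \<delta>)) \<subseteq> - (\<Union>s\<in>{1..m}. sphere (c s) (r s + \<delta>))"
proof
  fix z assume "z \<in> (\<Union>j\<in>{1..m}. ball (c j) (r j + \<delta>))"
  then obtain j where j: "j \<in> {1..m}" "norm (z - c j) < r j + \<delta>"
    by (auto simp: dist_norm norm_minus_commute)
  have "norm (z - c s) \<noteq> r s + \<delta>" if s: "s \<in> {1..m}" for s
    using admissible_width_far_from_other_disks[OF assms s j(1) _ j(2)] j admissible_widthD(1)[OF assms]
    by (cases "s = j") auto
  then show "z \<in> - (\<Union>s\<in>{1..m}. sphere (c s) (r s + \<delta>))"
    by (auto simp: dist_norm norm_minus_commute)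
qed

lemma obtain_admissible_width:
  assumes "inH c r m f"
  obtains U \<delta> where "open U" "f holomorphic_on U" "admissible_width U \<delta>"
proof -
  obtain U where U: "open U" "circles c r m \<subseteq> U" "f holomorphic_on U"
    using assms unfolding inH_def by blast
  then show ?thesis
    using eventually_happens'[OF _ eventually_admissible_width[OF U(1,2)]] that by auto
qed

lemma plus_part_spec:
  assumes "inH c r m f"
  shows "inH c r m (plus_part c r m f)"
    and "\<forall>\<^sub>F z in circles_nhds c r m. z \<in> Dint c r m \<longrightarrow> plus_part c r m f z = cauchy_sum c r m f z"
proof -
  obtain U \<delta> where U: "open U" "f holomorphic_on U" and \<delta>: "admissible_width U \<delta>"
    using obtain_admissible_width[OF assms] .
  have "\<exists>g. inH c r m g \<and>
          (\<exists>V. open V \<and> circles c r m \<subseteq> V \<and> (\<forall>z\<in>V \<inter> Dint c r m. g z = cauchy_sum c r m f z))"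
    using inH_shifted_cauchy_sum[OF U \<delta>, of \<delta>] shifted_cauchy_sum_eq_cauchy_sum_inside[OF U \<delta>]
      admissible_widthD(1)[OF \<delta>]
    by (intro exI[of _ "shifted_cauchy_sum f \<delta>"] conjI exI[of _ UNIV]) auto
  then have "inH c r m (plus_part c r m f) \<and> (\<exists>V. open V \<and> circles c r m \<subseteq> V
               \<and> (\<forall>z\<in>V \<inter> Dint c r m. plus_part c r m f z = cauchy_sum c r m f z))"
    unfolding plus_part_def by (rule someI_ex)
  then show "inH c r m (plus_part c r m f)"
    and "\<forall>\<^sub>F z in circles_nhds c r m. z \<in> Dint c r m \<longrightarrow> plus_part c r m f z = cauchy_sum c r m f z"
    by (auto simp: eventually_circles_nhds)
qed

lemma minus_part_spec:
  assumes "inH c r m f"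
  shows "inH c r m (minus_part c r m f)"
    and "\<forall>\<^sub>F z in circles_nhds c r m. z \<in> Dext c r m \<longrightarrow> minus_part c r m f z = - cauchy_sum c r m f z"
proof -
  obtain U \<delta> where U: "open U" "f holomorphic_on U" and \<delta>: "admissible_width U \<delta>"
    using obtain_admissible_width[OF assms] .
  have "\<exists>g. inH c r m g \<and>
          (\<exists>V. open V \<and> circles c r m \<subseteq> V \<and> (\<forall>z\<in>V \<inter> Dext c r m. g z = - cauchy_sum c r m f z))"
    using inH_shifted_cauchy_sum[OF U \<delta>, of "- \<delta>"] shifted_cauchy_sum_eq_cauchy_sum_outside[OF U \<delta>]
      admissible_widthD(1)[OF \<delta>]
    by (intro exI[of _ "\<lambda>z. - shifted_cauchy_sum f (- \<delta>) z"] conjI exI[of _ UNIV] inH_minus) auto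
  then have "inH c r m (minus_part c r m f) \<and> (\<exists>V. open V \<and> circles c r m \<subseteq> V
               \<and> (\<forall>z\<in>V \<inter> Dext c r m. minus_part c r m f z = - cauchy_sum c r m f z))"
    unfolding minus_part_def by (rule someI_ex)
  then show "inH c r m (minus_part c r m f)"
    and "\<forall>\<^sub>F z in circles_nhds c r m. z \<in> Dext c r m \<longrightarrow> minus_part c r m f z = - cauchy_sum c r m f z"
    by (auto simp: eventually_circles_nhds)
qed

lemmas inH_plus_part = plus_part_spec(1) and inH_minus_part = minus_part_spec(1)

lemma plus_part_eqI:
  assumes "inH c r m f" "inH c r m g"
    and "\<forall>\<^sub>F z in circles_nhds c r m. z \<in> Dint c r m \<longrightarrow> g z = cauchy_sum c r m f z"
  shows "\<forall>\<^sub>F z in circles_nhds c r m. plus_part c r m f z = g z"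
  using plus_part_spec(2)[OF assms(1)] assms(3)
  by (intro eventually_eq_if_eventually_eq_on[OF inH_plus_part[OF assms(1)] assms(2) islimpt_Dint])
    (auto elim: eventually_elim2)

lemma minus_part_eqI:
  assumes "inH c r m f" "inH c r m g"
    and "\<forall>\<^sub>F z in circles_nhds c r m. z \<in> Dext c r m \<longrightarrow> g z = - cauchy_sum c r m f z"
  shows "\<forall>\<^sub>F z in circles_nhds c r m. minus_part c r m f z = g z"
  using minus_part_spec(2)[OF assms(1)] assms(3)
  by (intro eventually_eq_if_eventually_eq_on[OF inH_minus_part[OF assms(1)] assms(2) islimpt_Dext])
    (auto elim: eventually_elim2)

context
  fixes U \<delta> f
  assumes U: "open U" and f: "f holomorphic_on U" and \<delta>: "admissible_width U \<delta>"
begin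

lemma inH_if_admissible_width: "inH c r m f"
  unfolding inH_def using U f circles_subset_if_admissible_width[OF \<delta>] by blast

lemma plus_part_eq_shifted_cauchy_sum:
  "\<forall>\<^sub>F z in circles_nhds c r m. plus_part c r m f z = shifted_cauchy_sum f \<delta> z"
  using inH_shifted_cauchy_sum[OF U f \<delta>, of \<delta>] admissible_widthD(1)[OF \<delta>]
    shifted_cauchy_sum_eq_cauchy_sum_inside[OF U f \<delta>]
  by (intro plus_part_eqI inH_if_admissible_width) auto

lemma minus_part_eq_shifted_cauchy_sum:
  "\<forall>\<^sub>F z in circles_nhds c r m. minus_part c r m f z = - shifted_cauchy_sum f (- \<delta>) z"
  using inH_shifted_cauchy_sum[OF U f \<delta>, of "- \<delta>"] admissible_widthD(1)[OF \<delta>]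
    shifted_cauchy_sum_eq_cauchy_sum_outside[OF U f \<delta>]
  by (intro minus_part_eqI inH_if_admissible_width inH_minus) auto

end

lemma plus_minus_decomposition:
  assumes "inH c r m f"
  shows "\<forall>\<^sub>F z in circles_nhds c r m. plus_part c r m f z + minus_part c r m f z = f z"
proof -
  obtain U \<delta> where U: "open U" "f holomorphic_on U" and \<delta>: "admissible_width U \<delta>"
    using obtain_admissible_width[OF assms] .
  show ?thesis
    using plus_part_eq_shifted_cauchy_sum[OF U \<delta>] minus_part_eq_shifted_cauchy_sum[OF U \<delta>]
      eventually_near_some_circle[OF admissible_widthD(1)[OF \<delta>]]
  proof eventually_elim
    case (elim z)
    then show ?case using shifted_cauchy_sum_jump[OF U \<delta>] by auto
  qed
qed

lemma plus_part_eq_diff: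
  "inH c r m f \<Longrightarrow> \<forall>\<^sub>F z in circles_nhds c r m. plus_part c r m f z = f z - minus_part c r m f z"
  using plus_minus_decomposition by (auto elim!: eventually_mono simp: eq_diff_eq)

lemma cauchy_sum_cong:
  assumes "\<forall>\<^sub>F z in circles_nhds c r m. f z = g z"
  shows "cauchy_sum c r m f = cauchy_sum c r m g"
proof
  fix z
  obtain V where V: "circles c r m \<subseteq> V" "\<forall>p\<in>V. f p = g p"
    using assms unfolding eventually_circles_nhds by blast
  have "contour_integral (circlepath (c s) (r s)) (\<lambda>p. f p / (p - z))
        = contour_integral (circlepath (c s) (r s)) (\<lambda>p. g p / (p - z))" if "s \<in> {1..m}" for s
  proof (rule contour_integral_eq)
    fix p assume "p \<in> path_image (circlepath (c s) (r s))"
    then have "p \<in> V" using V sphere_subset_circles[OF that] r_pos[OF that] by auto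
    then show "f p / (p - z) = g p / (p - z)" using V by simp
  qed
  then show "cauchy_sum c r m f z = cauchy_sum c r m g z" unfolding cauchy_sum_def by simp
qed

lemma plus_part_cong: "\<forall>\<^sub>F z in circles_nhds c r m. f z = g z \<Longrightarrow> plus_part c r m f = plus_part c r m g"
  unfolding plus_part_def using cauchy_sum_cong by simp

lemma minus_part_cong: "\<forall>\<^sub>F z in circles_nhds c r m. f z = g z \<Longrightarrow> minus_part c r m f = minus_part c r m g"
  unfolding minus_part_def using cauchy_sum_cong by simp

lemma contour_integrable_Cauchy_kernel:
  assumes "inH c r m f" "s \<in> {1..m}" "z \<notin> circles c r m"
  shows "(\<lambda>p. f p / (p - z)) contour_integrable_on circlepath (c s) (r s)"
proof -
  obtain U where U: "open U" "circles c r m \<subseteq> U" "f holomorphic_on U"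
    using assms(1) unfolding inH_def by blast
  have "(\<lambda>p. f p / (p - z)) holomorphic_on U - {z}"
    using U by (intro holomorphic_intros) (auto intro: holomorphic_on_subset)
  then show ?thesis
    using U sphere_subset_circles[OF assms(2)] assms(3) r_pos[OF assms(2)]
    by (intro contour_integrable_holomorphic_simple[of _ "U - {z}"]) auto
qed

lemma cauchy_sum_linear:
  assumes "inH c r m f" "inH c r m g" "z \<notin> circles c r m"
  shows "cauchy_sum c r m (\<lambda>p. \<alpha> * f p + g p) z = \<alpha> * cauchy_sum c r m f z + cauchy_sum c r m g z"
proof -
  have "contour_integral (circlepath (c s) (r s)) (\<lambda>p. (\<alpha> * f p + g p) / (p - z))
        = \<alpha> * contour_integral (circlepath (c s) (r s)) (\<lambda>p. f p / (p - z))
            + contour_integral (circlepath (c s) (r s)) (\<lambda>p. g p / (p - z))" if s: "s \<in> {1..m}" for s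
  proof -
    note int = contour_integrable_Cauchy_kernel[OF _ s assms(3)]
    have "contour_integral (circlepath (c s) (r s)) (\<lambda>p. (\<alpha> * f p + g p) / (p - z))
          = contour_integral (circlepath (c s) (r s)) (\<lambda>p. \<alpha> * (f p / (p - z)) + g p / (p - z))"
      by (simp add: add_divide_distrib)
    also have "\<dots> = \<alpha> * contour_integral (circlepath (c s) (r s)) (\<lambda>p. f p / (p - z))
                     + contour_integral (circlepath (c s) (r s)) (\<lambda>p. g p / (p - z))"
      by (simp only: contour_integral_add[OF contour_integrable_lmul[OF int[OF assms(1)]] int[OF assms(2)]]
          contour_integral_lmul[OF int[OF assms(1)]])
    finally show ?thesis .
  qed
  then show ?thesis
    unfolding cauchy_sum_def by (simp add: sum.distrib sum_distrib_left algebra_simps)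
qed

lemma minus_part_linear:
  assumes "inH c r m f" "inH c r m g"
  shows "\<forall>\<^sub>F z in circles_nhds c r m.
           minus_part c r m (\<lambda>p. \<alpha> * f p + g p) z = \<alpha> * minus_part c r m f z + minus_part c r m g z"
proof (intro minus_part_eqI inH_add inH_mult inH_const inH_minus_part assms)
  show "\<forall>\<^sub>F z in circles_nhds c r m. z \<in> Dext c r m \<longrightarrow>
          \<alpha> * minus_part c r m f z + minus_part c r m g z = - cauchy_sum c r m (\<lambda>p. \<alpha> * f p + g p) z"
    using minus_part_spec(2)[OF assms(1)] minus_part_spec(2)[OF assms(2)]
    by eventually_elim (auto simp: cauchy_sum_linear[OF assms notin_circles_if_Dext])
qed

lemma minus_part_eq_0_if_holomorphic_on_enlarged_disks:
  assumes "0 < \<delta>" "h holomorphic_on (\<Union>s\<in>{1..m}. ball (c s) (r s + \<delta>))"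
  shows "\<forall>\<^sub>F z in circles_nhds c r m. minus_part c r m h z = 0"
proof (rule minus_part_eqI[OF _ inH_const])
  have "circles c r m \<subseteq> (\<Union>s\<in>{1..m}. ball (c s) (r s + \<delta>))"
    unfolding circles_def using assms(1) by (intro UN_mono) auto
  then show "inH c r m h"
    unfolding inH_def using assms(2) by (intro exI[of _ "\<Union>s\<in>{1..m}. ball (c s) (r s + \<delta>)"]) auto
  have "cauchy_sum c r m h z = 0" if z: "z \<in> Dext c r m" for z
  proof -
    have "contour_integral (circlepath (c s) (r s)) (\<lambda>p. h p / (p - z)) = 0" if s: "s \<in> {1..m}" for s
    proof -
      define R where "R = min (r s + \<delta>) (norm (z - c s))"
      have "z \<notin> cball (c s) (r s)" using z s unfolding Dext_def by blast
      then have R: "r s < R" using assms(1) by (simp add: R_def dist_norm norm_minus_commute)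
      have sub: "ball (c s) R \<subseteq> (\<Union>s\<in>{1..m}. ball (c s) (r s + \<delta>))" "z \<notin> ball (c s) R"
        using s by (auto simp: R_def dist_norm norm_minus_commute)
      then have "(\<lambda>p. h p / (p - z)) holomorphic_on ball (c s) R"
        by (intro holomorphic_intros holomorphic_on_subset[OF assms(2) sub(1)]) auto
      then show ?thesis
        using R r_pos[OF s] by (intro contour_integral_unique has_contour_integral_circlepath_zero)
    qed
    then show ?thesis by (simp add: cauchy_sum_def)
  qed
  then show "\<forall>\<^sub>F z in circles_nhds c r m. z \<in> Dext c r m \<longrightarrow> 0 = - cauchy_sum c r m h z"
    by (simp add: always_eventually)
qed

lemma circles_subset_compl_shrunk_disks:
  assumes "0 < \<delta>"
  shows "circles c r m \<subseteq> - (\<Union>s\<in>{1..m}. cball (c s) (r s - \<delta>))"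
proof
  fix z assume "z \<in> circles c r m"
  then obtain j where j: "j \<in> {1..m}" "dist (c j) z = r j" by (rule circlesE)
  have "z \<notin> cball (c s) (r s - \<delta>)" if s: "s \<in> {1..m}" for s
  proof (cases "s = j")
    case False
    have "z \<in> cball (c j) (r j)" "cball (c s) (r s - \<delta>) \<subseteq> cball (c s) (r s)"
      using j assms by auto
    then show ?thesis using disjoint[OF s j(1) False] by blast
  qed (use j assms in auto)
  then show "z \<in> - (\<Union>s\<in>{1..m}. cball (c s) (r s - \<delta>))" by blast
qed

lemma cauchy_sum_eq_0_if_holomorphic_outside_shrunk_disks:
  assumes "0 < \<delta>" "\<And>s. s \<in> {1..m} \<Longrightarrow> \<delta> < r s"
    and hol: "h holomorphic_on - (\<Union>s\<in>{1..m}. cball (c s) (r s - \<delta>))"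
    and lim: "((\<lambda>z. z * h z) \<longlongrightarrow> 0) at_infinity"
    and z: "z \<in> Dint c r m" "z \<notin> (\<Union>s\<in>{1..m}. cball (c s) (r s - \<delta>))"
  shows "cauchy_sum c r m h z = 0"
proof -
  obtain j where j: "j \<in> {1..m}" "norm (z - c j) < r j"
    using z(1) unfolding Dint_def by (auto simp: dist_norm norm_minus_commute)
  have "z \<notin> cball (c j) (r j - \<delta>)" using z(2) j(1) by blast
  then have z_j: "r j - \<delta> < norm (z - c j)" by (simp add: dist_norm norm_minus_commute)
  \<comment> \<open>shrink the circles, except the one around \<open>z\<close>, which must keep \<open>z\<close> inside\<close>
  define \<rho> where "\<rho> s = (if s = j then (norm (z - c j) + r j) / 2 else r s - \<delta>)" for s
  have \<rho>: "0 < \<rho> s \<and> \<rho> s < r s" "r s - \<delta> \<le> \<rho> s" if "s \<in> {1..m}" for s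
    using that j assms(1) assms(2)[of s] z_j by (auto simp: \<rho>_def)
  have "p \<in> - (\<Union>s\<in>{1..m}. cball (c s) (r s - \<delta>)) - {z}"
    if p: "p \<notin> (\<Union>s\<in>{1..m}. cball (c s) (\<rho> s))" for p
  proof -
    have "p \<notin> cball (c s) (r s - \<delta>)" if s: "s \<in> {1..m}" for s
    proof -
      have "p \<notin> cball (c s) (\<rho> s)" using p s by blast
      then show ?thesis using \<rho>(2)[OF s] by auto
    qed
    moreover have "z \<in> cball (c j) (\<rho> j)"
      using j by (simp add: \<rho>_def dist_norm norm_minus_commute)
    ultimately show ?thesis using p j(1) by blast
  qed
  moreover have "(\<lambda>p. h p / (p - z)) holomorphic_on - (\<Union>s\<in>{1..m}. cball (c s) (r s - \<delta>)) - {z}"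
    using holomorphic_on_subset[OF hol] by (intro holomorphic_intros) auto
  ultimately have "(\<lambda>p. h p / (p - z)) holomorphic_on - (\<Union>s\<in>{1..m}. cball (c s) (\<rho> s))"
    by (elim holomorphic_on_subset) blast
  from sum_circlepath_integrals_eq_limit_at_infinity[OF _ \<rho>(1) disjoint this
      tendsto_times_Cauchy_kernel_at_infinity[OF lim]]
  show ?thesis by (simp add: cauchy_sum_def)
qed

lemma plus_part_eq_0_if_holomorphic_outside_shrunk_disks:
  assumes "0 < \<delta>" "\<And>s. s \<in> {1..m} \<Longrightarrow> \<delta> < r s"
    and hol: "h holomorphic_on - (\<Union>s\<in>{1..m}. cball (c s) (r s - \<delta>))"
    and lim: "((\<lambda>z. z * h z) \<longlongrightarrow> 0) at_infinity"
  shows "\<forall>\<^sub>F z in circles_nhds c r m. plus_part c r m h z = 0"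
proof -
  define \<Omega> where "\<Omega> = - (\<Union>s\<in>{1..m}. cball (c s) (r s - \<delta>))"
  have "open \<Omega>" unfolding \<Omega>_def by (intro open_Compl closed_UN) auto
  moreover have "circles c r m \<subseteq> \<Omega>"
    unfolding \<Omega>_def using circles_subset_compl_shrunk_disks[OF assms(1)] .
  moreover have "h holomorphic_on \<Omega>" using hol unfolding \<Omega>_def .
  ultimately have h: "inH c r m h" and near: "\<forall>\<^sub>F z in circles_nhds c r m. z \<in> \<Omega>"
    unfolding inH_def eventually_circles_nhds by (auto intro!: exI[of _ \<Omega>])
  show ?thesis
    using near cauchy_sum_eq_0_if_holomorphic_outside_shrunk_disks[OF assms]
    by (intro plus_part_eqI[OF h inH_const]) (auto elim!: eventually_mono simp: \<Omega>_def)
qed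

lemma obtain_common_admissible_width:
  assumes "inH c r m f" "inH c r m g"
  obtains U V \<delta> where "open U" "f holomorphic_on U" "admissible_width U \<delta>"
    and "open V" "g holomorphic_on V" "admissible_width V \<delta>"
proof -
  obtain U V where U: "open U" "circles c r m \<subseteq> U" "f holomorphic_on U"
    and V: "open V" "circles c r m \<subseteq> V" "g holomorphic_on V"
    using assms unfolding inH_def by blast
  have "\<forall>\<^sub>F \<delta> in at_right 0. admissible_width U \<delta> \<and> admissible_width V \<delta>"
    using eventually_admissible_width[OF U(1,2)] eventually_admissible_width[OF V(1,2)]
    by (rule eventually_conj)
  then show ?thesis using eventually_happens'[of "at_right (0::real)"] that U V by force
qed

lemma minus_part_mult_plus_parts:
  assumes "inH c r m f" "inH c r m g"
  shows "\<forall>\<^sub>F z in circles_nhds c r m. minus_part c r m (\<lambda>z. plus_part c r m f z * plus_part c r m g z) z = 0"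
proof -
  obtain U V \<delta> where U: "open U" "f holomorphic_on U" "admissible_width U \<delta>"
    and V: "open V" "g holomorphic_on V" "admissible_width V \<delta>"
    using obtain_common_admissible_width[OF assms] .
  have "\<forall>\<^sub>F z in circles_nhds c r m.
          plus_part c r m f z * plus_part c r m g z = shifted_cauchy_sum f \<delta> z * shifted_cauchy_sum g \<delta> z"
    using plus_part_eq_shifted_cauchy_sum[OF U] plus_part_eq_shifted_cauchy_sum[OF V]
    by eventually_elim simp
  then have "minus_part c r m (\<lambda>z. plus_part c r m f z * plus_part c r m g z)
             = minus_part c r m (\<lambda>z. shifted_cauchy_sum f \<delta> z * shifted_cauchy_sum g \<delta> z)"
    by (rule minus_part_cong)
  moreover have "(\<lambda>z. shifted_cauchy_sum f \<delta> z * shifted_cauchy_sum g \<delta> z)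
                   holomorphic_on (\<Union>s\<in>{1..m}. ball (c s) (r s + \<delta>))"
    using holomorphic_on_shifted_cauchy_sum[OF U, of \<delta>] holomorphic_on_shifted_cauchy_sum[OF V, of \<delta>]
      enlarged_disks_subset_compl_shifted_spheres[OF U(3)] admissible_widthD(1)[OF U(3)]
    by (auto intro!: holomorphic_intros intro: holomorphic_on_subset)
  ultimately show ?thesis
    using minus_part_eq_0_if_holomorphic_on_enlarged_disks admissible_widthD(1)[OF U(3)] by simp
qed

lemma plus_part_mult_minus_parts:
  assumes "inH c r m f" "inH c r m g"
  shows "\<forall>\<^sub>F z in circles_nhds c r m. plus_part c r m (\<lambda>z. minus_part c r m f z * minus_part c r m g z) z = 0"
proof -
  obtain U V \<delta> where U: "open U" "f holomorphic_on U" "admissible_width U \<delta>"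
    and V: "open V" "g holomorphic_on V" "admissible_width V \<delta>"
    using obtain_common_admissible_width[OF assms] .
  have \<delta>: "0 < \<delta>" "\<And>s. s \<in> {1..m} \<Longrightarrow> \<delta> < r s"
    using admissible_widthD(1,2)[OF U(3)] by fastforce+
  have "\<forall>\<^sub>F z in circles_nhds c r m.
          minus_part c r m f z * minus_part c r m g z
          = shifted_cauchy_sum f (- \<delta>) z * shifted_cauchy_sum g (- \<delta>) z"
    using minus_part_eq_shifted_cauchy_sum[OF U] minus_part_eq_shifted_cauchy_sum[OF V]
    by eventually_elim simp
  then have eq: "plus_part c r m (\<lambda>z. minus_part c r m f z * minus_part c r m g z)
             = plus_part c r m (\<lambda>z. shifted_cauchy_sum f (- \<delta>) z * shifted_cauchy_sum g (- \<delta>) z)"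
    by (rule plus_part_cong)
  have hol: "(\<lambda>z. shifted_cauchy_sum f (- \<delta>) z * shifted_cauchy_sum g (- \<delta>) z)
                   holomorphic_on - (\<Union>s\<in>{1..m}. cball (c s) (r s - \<delta>))"
  proof -
    have "- (\<Union>s\<in>{1..m}. cball (c s) (r s - \<delta>)) \<subseteq> - (\<Union>s\<in>{1..m}. sphere (c s) (r s + - \<delta>))"
      by (intro compl_mono UN_mono) auto
    then show ?thesis
      using \<delta>(1) by (intro holomorphic_intros holomorphic_on_subset[OF holomorphic_on_shifted_cauchy_sum[OF U]]
          holomorphic_on_subset[OF holomorphic_on_shifted_cauchy_sum[OF V]]) auto
  qed
  obtain Lf where Lf: "((\<lambda>z. z * shifted_cauchy_sum f (- \<delta>) z) \<longlongrightarrow> Lf) at_infinity"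
    using tendsto_times_shifted_cauchy_sum[OF U, of "- \<delta>"] \<delta>(1) by auto
  obtain Lg where Lg: "((\<lambda>z. z * shifted_cauchy_sum g (- \<delta>) z) \<longlongrightarrow> Lg) at_infinity"
    using tendsto_times_shifted_cauchy_sum[OF V, of "- \<delta>"] \<delta>(1) by auto
  have "((\<lambda>z. z * (shifted_cauchy_sum f (- \<delta>) z * shifted_cauchy_sum g (- \<delta>) z)) \<longlongrightarrow> 0) at_infinity"
    using tendsto_mult[OF Lf tendsto_0_at_infinity_if_times_tendsto[OF Lg]] by (simp add: mult.assoc)
  then show ?thesis
    unfolding eq using plus_part_eq_0_if_holomorphic_outside_shrunk_disks[OF \<delta>(1) _ hol] \<delta>(2) by blast
qed

end

locale germ_product = disjoint_disks +
  fixes a ah :: "complex \<Rightarrow> complex"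
  assumes inH_a: "inH c r m a" and inH_ah: "inH c r m ah"
begin

definition weight :: "(complex \<Rightarrow> complex) \<times> (complex \<Rightarrow> complex) \<Rightarrow> complex \<Rightarrow> complex" where
  "weight x = (\<lambda>p. fst x p * deriv a p + snd x p * deriv ah p)"

lemma inH_weight: "inHH c r m x \<Longrightarrow> inH c r m (weight x)"
  unfolding weight_def inHH_def by (intro inH_add inH_mult inH_deriv inH_a inH_ah) auto

lemma circ_prod_eq:
  assumes "inHH c r m x" "inHH c r m y"
  shows "\<forall>\<^sub>F z in circles_nhds c r m. fst (circ_prod c r m a ah x y) z
           = fst x z * fst y z * deriv a z
             - fst x z * minus_part c r m (weight y) z - fst y z * minus_part c r m (weight x) z"
    and "\<forall>\<^sub>F z in circles_nhds c r m. snd (circ_prod c r m a ah x y) z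
           = snd x z * snd y z * deriv ah z + (snd x z * fst y z + fst x z * snd y z) * deriv a z
             - snd x z * minus_part c r m (weight y) z - snd y z * minus_part c r m (weight x) z"
proof -
  have H: "inH c r m (\<lambda>p. fst u p * deriv a p)" "inH c r m (\<lambda>p. snd u p * deriv ah p)"
    if "inHH c r m u" for u
    using that unfolding inHH_def by (auto intro!: inH_mult inH_deriv inH_a inH_ah)
  have split_weight: "\<forall>\<^sub>F z in circles_nhds c r m. minus_part c r m (weight u) z
          = minus_part c r m (\<lambda>p. fst u p * deriv a p) z + minus_part c r m (\<lambda>p. snd u p * deriv ah p) z"
    if "inHH c r m u" for u
    using minus_part_linear[OF H[OF that], of 1] by (simp add: weight_def)
  note eqs = plus_part_eq_diff[OF H(1)[OF assms(1)]] plus_part_eq_diff[OF H(1)[OF assms(2)]]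
    plus_part_eq_diff[OF H(2)[OF assms(1)]] split_weight[OF assms(1)] split_weight[OF assms(2)]
  show "\<forall>\<^sub>F z in circles_nhds c r m. fst (circ_prod c r m a ah x y) z
          = fst x z * fst y z * deriv a z
            - fst x z * minus_part c r m (weight y) z - fst y z * minus_part c r m (weight x) z"
    using eqs
  proof eventually_elim
    case (elim z)
    show ?case unfolding circ_prod_def Let_def fst_conv elim by (simp add: algebra_simps)
  qed
  show "\<forall>\<^sub>F z in circles_nhds c r m. snd (circ_prod c r m a ah x y) z
          = snd x z * snd y z * deriv ah z + (snd x z * fst y z + fst x z * snd y z) * deriv a z
            - snd x z * minus_part c r m (weight y) z - snd y z * minus_part c r m (weight x) z"
    using eqs
  proof eventually_elim
    case (elim z)
    show ?case unfolding circ_prod_def Let_def snd_conv elim by (simp add: algebra_simps)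
  qed
qed

lemma minus_part_weight_circ_prod:
  assumes "inHH c r m x" "inHH c r m y"
  shows "\<forall>\<^sub>F z in circles_nhds c r m. minus_part c r m (weight (circ_prod c r m a ah x y)) z
           = - minus_part c r m (weight x) z * minus_part c r m (weight y) z"
proof -
  note X = inH_weight[OF assms(1)] and Y = inH_weight[OF assms(2)]
  define PP where "PP z = plus_part c r m (weight x) z * plus_part c r m (weight y) z" for z
  define MM where "MM z = minus_part c r m (weight x) z * minus_part c r m (weight y) z" for z
  have PP: "inH c r m PP" and MM: "inH c r m MM"
    unfolding PP_def MM_def by (intro inH_mult inH_plus_part inH_minus_part X Y)+
  \<comment> \<open>with \<open>s = weight\<close>: \<open>s (x \<circ> y) = s x s y - s x (s y)\<^sub>- - s y (s x)\<^sub>- = (s x)\<^sub>+ (s y)\<^sub>+ - (s x)\<^sub>- (s y)\<^sub>-\<close>\<close>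
  have "\<forall>\<^sub>F z in circles_nhds c r m. weight (circ_prod c r m a ah x y) z = (-1) * MM z + PP z"
    using circ_prod_eq[OF assms] plus_part_eq_diff[OF X] plus_part_eq_diff[OF Y]
  proof eventually_elim
    case (elim z)
    have weight_at: "weight u z = fst u z * deriv a z + snd u z * deriv ah z" for u
      by (simp add: weight_def)
    show ?case unfolding PP_def MM_def elim weight_at elim by (simp add: algebra_simps)
  qed
  then have weight_eq: "minus_part c r m (weight (circ_prod c r m a ah x y))
                          = minus_part c r m (\<lambda>z. (-1) * MM z + PP z)"
    by (rule minus_part_cong)
  have MM_fixed: "\<forall>\<^sub>F z in circles_nhds c r m. minus_part c r m MM z = MM z"
    using plus_part_eq_diff[OF MM] plus_part_mult_minus_parts[OF X Y] unfolding MM_def[symmetric]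
    by eventually_elim simp
  show ?thesis
    unfolding weight_eq using MM_fixed minus_part_linear[OF MM PP, of "-1"] minus_part_mult_plus_parts[OF X Y]
    unfolding PP_def[symmetric] by eventually_elim (simp add: MM_def)
qed

lemma inHH_circ_prod: "inHH c r m x \<Longrightarrow> inHH c r m y \<Longrightarrow> inHH c r m (circ_prod c r m a ah x y)"
  unfolding circ_prod_def Let_def inHH_def
  by (auto intro!: inH_add inH_diff inH_mult inH_plus_part inH_minus_part inH_deriv inH_a inH_ah)

lemma inHH_lin2: "inHH c r m x \<Longrightarrow> inHH c r m y \<Longrightarrow> inHH c r m (lin2 \<alpha> x y)"
  unfolding lin2_def inHH_def by (auto intro!: inH_add inH_mult inH_const)

lemma circ_prod_linear:
  assumes "inHH c r m x" "inHH c r m y" "inHH c r m z"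
  shows "germ_eq2 c r m (circ_prod c r m a ah (lin2 \<alpha> x y) z)
           (lin2 \<alpha> (circ_prod c r m a ah x z) (circ_prod c r m a ah y z))"
proof -
  have "weight (lin2 \<alpha> x y) = (\<lambda>p. \<alpha> * weight x p + weight y p)"
    by (simp add: weight_def lin2_def fun_eq_iff algebra_simps)
  then have "\<forall>\<^sub>F p in circles_nhds c r m. minus_part c r m (weight (lin2 \<alpha> x y)) p
               = \<alpha> * minus_part c r m (weight x) p + minus_part c r m (weight y) p"
    using minus_part_linear[OF inH_weight[OF assms(1)] inH_weight[OF assms(2)]] by simp
  then show ?thesis
    unfolding germ_eq2_iff_eventually
    using circ_prod_eq[OF inHH_lin2[OF assms(1,2), of \<alpha>] assms(3)]
      circ_prod_eq[OF assms(1,3)] circ_prod_eq[OF assms(2,3)]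
  proof eventually_elim
    case (elim p)
    show ?case
      unfolding elim unfolding lin2_def fst_conv snd_conv elim by (simp add: algebra_simps)
  qed
qed

lemma circ_prod_commute:
  assumes "inHH c r m x" "inHH c r m y"
  shows "germ_eq2 c r m (circ_prod c r m a ah x y) (circ_prod c r m a ah y x)"
  unfolding germ_eq2_iff_eventually
  using circ_prod_eq[OF assms] circ_prod_eq[OF assms(2,1)]
proof eventually_elim
  case (elim p)
  show ?case unfolding elim by (simp add: algebra_simps)
qed

lemma circ_prod_assoc:
  assumes "inHH c r m x" "inHH c r m y" "inHH c r m z"
  shows "germ_eq2 c r m (circ_prod c r m a ah (circ_prod c r m a ah x y) z)
           (circ_prod c r m a ah x (circ_prod c r m a ah y z))"
  unfolding germ_eq2_iff_eventually
  using circ_prod_eq[OF inHH_circ_prod[OF assms(1,2)] assms(3)]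
    circ_prod_eq[OF assms(1) inHH_circ_prod[OF assms(2,3)]]
    circ_prod_eq[OF assms(1,2)] circ_prod_eq[OF assms(2,3)]
    minus_part_weight_circ_prod[OF assms(1,2)] minus_part_weight_circ_prod[OF assms(2,3)]
proof eventually_elim
  case (elim p)
  show ?case unfolding elim by (simp add: algebra_simps)
qed

end

theorem lemma2p5:
  fixes m :: nat and n :: "nat \<Rightarrow> nat" and d :: "nat \<Rightarrow> int"
    and c :: "nat \<Rightarrow> complex" and r :: "nat \<Rightarrow> real"
    and a ah :: "complex \<Rightarrow> complex" and \<phi> :: "nat \<Rightarrow> complex"
    and w :: "nat \<Rightarrow> complex \<Rightarrow> complex"
  assumes m: "m \<ge> 1"
    and n_pos: "\<forall>i\<in>{0..m}. n i > 0"
    and d_nz: "\<forall>i\<in>{1..m}. d i \<noteq> 0"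
    and r_pos: "\<forall>i\<in>{1..m}. r i > 0"
    and disj: "\<forall>i\<in>{1..m}. \<forall>j\<in>{1..m}. i \<noteq> j \<longrightarrow> cball (c i) (r i) \<inter> cball (c j) (r j) = {}"
    \<comment> \<open>conditions for (a, ah) in M\<close>
    and a_H: "inH c r m a"
    and a_hol: "a holomorphic_on Dext c r m"
    and a_inf: "(\<lambda>z. a z - z ^ n 0) \<in> O[at_infinity](\<lambda>z. z powi (int (n 0) - 2))"
    and ah_H: "inH c r m ah"
    and phi_in: "\<forall>j\<in>{1..m}. \<phi> j \<in> ball (c j) (r j)"
    and ah_hol: "ah holomorphic_on (Dint c r m - \<phi> ` {1..m})"
    and ah_pole: "\<forall>j\<in>{1..m}. \<exists>L. L \<noteq> 0 \<and> ((\<lambda>z. (z - \<phi> j) ^ n j * ah z) \<longlongrightarrow> L) (at (\<phi> j))"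
    and w_hol: "\<forall>j\<in>{1..m}. \<exists>U. open U \<and> sphere (c j) (r j) \<subseteq> U \<and> w j holomorphic_on U
                   \<and> (\<forall>z\<in>U. deriv (w j) z \<noteq> 0)"
    and w_wind: "\<forall>j\<in>{1..m}. 0 \<notin> path_image (w j \<circ> circlepath (c j) (r j))
                   \<and> winding_number (w j \<circ> circlepath (c j) (r j)) 0 = 1"
    and jump: "\<forall>j\<in>{1..m}. \<forall>z\<in>sphere (c j) (r j). a z - ah z = w j z powi d j"
  shows "(\<forall>x y. inHH c r m x \<and> inHH c r m y \<longrightarrow> inHH c r m (circ_prod c r m a ah x y))
       \<and> (\<forall>\<alpha> x y z. inHH c r m x \<and> inHH c r m y \<and> inHH c r m z \<longrightarrow>
            germ_eq2 c r m (circ_prod c r m a ah (lin2 \<alpha> x y) z)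
                           (lin2 \<alpha> (circ_prod c r m a ah x z) (circ_prod c r m a ah y z)))
       \<and> (\<forall>x y. inHH c r m x \<and> inHH c r m y \<longrightarrow>
            germ_eq2 c r m (circ_prod c r m a ah x y) (circ_prod c r m a ah y x))
       \<and> (\<forall>x y z. inHH c r m x \<and> inHH c r m y \<and> inHH c r m z \<longrightarrow>
            germ_eq2 c r m (circ_prod c r m a ah (circ_prod c r m a ah x y) z)
                           (circ_prod c r m a ah x (circ_prod c r m a ah y z)))"
proof -
  interpret germ_product c r m a ah
    using r_pos disj a_H ah_H by unfold_locales auto
  show ?thesis
    using inHH_circ_prod circ_prod_linear circ_prod_commute circ_prod_assoc by blast
qed

end
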